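(* Let $\alpha,\beta\in[0,r]\cap A$ with $\alpha<\beta$, $I=(\alpha,\beta)$, and $x\in\mathbf F_I$ with $\mathrm{fix}(x)\cap I\cap A=\varnothing$. Then the centralizer of $x$ in $\mathbf F_I$ is cyclic.
   Context: Maps act on the right. Fix real $r>0$, a subgroup $\Lambda\neq\{1\}$ of $\mathbb R^*_+$, and an additive subgroup $A\subseteq\mathbb R$ with $r\in A$ and $\lambda A\subseteq A$ for $\lambda\in\Lambda$. $\mathbf F=\mathbf F(r,\Lambda,A)$ is the group of homeomorphisms $x\colon[0,r)\to[0,r)$ that are piecewise affine with finitely many breakpoints, all slopes in $\Lambda$, and all breakpoints and their images in $A$. For a permutation $x$, $\mathrm{fix}(x)$ is its fixed point set and $\mathrm{supp}(x)$ its complement. For $S\subseteq[0,r)$, $\mathbf F_S=\{x\in\mathbf F\mid\mathrm{supp}(x)\subseteq S\}$. *)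

theory Defs
  imports "HOL-Analysis.Analysis"
begin

definition std_params :: "real \<Rightarrow> real set \<Rightarrow> real set \<Rightarrow> bool" where
  "std_params r L A \<longleftrightarrow>
     r > 0 \<and>
     L \<subseteq> {0<..} \<and> 1 \<in> L \<and> (\<forall>a\<in>L. \<forall>b\<in>L. a * b \<in> L) \<and> (\<forall>a\<in>L. inverse a \<in> L) \<and>
     L \<noteq> {1} \<and>
     0 \<in> A \<and> (\<forall>a\<in>A. \<forall>b\<in>A. a + b \<in> A) \<and> (\<forall>a\<in>A. - a \<in> A) \<and>
     r \<in> A \<and> (\<forall>l\<in>L. \<forall>a\<in>A. l * a \<in> A)"

text \<open>Elements of F(r,L,A): homeomorphisms of [0,r), extended by the identity
  outside [0,r), piecewise affine with finitely many breakpoints, all slopes in L,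
  breakpoints and their images in A.  The breakpoints are encoded by a finite
  subdivision 0 = a 0 < a 1 < ... < a n = r of points of A (with images in A)
  such that x is affine with slope in L on each [a i, a (i+1)).\<close>
definition PLF :: "real \<Rightarrow> real set \<Rightarrow> real set \<Rightarrow> (real \<Rightarrow> real) set" where
  "PLF r L A = {x. (\<exists>g. homeomorphism {0..<r} {0..<r} x g) \<and>
      (\<forall>t. t \<notin> {0..<r} \<longrightarrow> x t = t) \<and>
      (\<exists>(n::nat) a. a 0 = 0 \<and> a n = r \<and> (\<forall>i<n. a i < a (Suc i)) \<and>
         (\<forall>i<n. a i \<in> A \<and> x (a i) \<in> A \<and>
            (\<exists>l\<in>L. \<exists>c. \<forall>t\<in>{a i..<a (Suc i)}. x t = l * t + c)))}"

definition fixset :: "real \<Rightarrow> (real \<Rightarrow> real) \<Rightarrow> real set" where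
  "fixset r x = {t\<in>{0..<r}. x t = t}"

definition supp :: "real \<Rightarrow> (real \<Rightarrow> real) \<Rightarrow> real set" where
  "supp r x = {t\<in>{0..<r}. x t \<noteq> t}"

definition PLF_on :: "real \<Rightarrow> real set \<Rightarrow> real set \<Rightarrow> real set \<Rightarrow> (real \<Rightarrow> real) set" where
  "PLF_on r L A S = {x\<in>PLF r L A. supp r x \<subseteq> S}"

definition fpow :: "(real \<Rightarrow> real) \<Rightarrow> int \<Rightarrow> (real \<Rightarrow> real)" where
  "fpow g k = (if 0 \<le> k then g ^^ nat k else (inv g) ^^ nat (- k))"

definition centralizer_in :: "(real \<Rightarrow> real) set \<Rightarrow> (real \<Rightarrow> real) \<Rightarrow> (real \<Rightarrow> real) set" where
  "centralizer_in G x = {y\<in>G. y \<circ> x = x \<circ> y}"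

definition cyclic_fun_group :: "(real \<Rightarrow> real) set \<Rightarrow> bool" where
  "cyclic_fun_group C \<longleftrightarrow> (\<exists>g. C = range (fpow g))"

end

theory Submission
  imports Defs
begin

(* Write I = (alpha, beta) and C for the centralizer of x in F_I.  Let p be the
   first fixed point of x in (alpha, beta] and let g be x or its inverse, chosen so that
   g t > t on (alpha, p).
   (1) Every y in C fixes alpha and p and commutes with g.
   (2) The right slope of y at alpha, slope y, is a homomorphism from C to the positive reals.
   (3) It is injective: if slope y = 1 then y is the identity near alpha, and the interval on
       which y is the identity extends up to beta, because a fixed point of x in I lies
       outside A and hence is not a breakpoint of y.
   (4) Its image has a gap above 1: if slope y > 1 is small, conjugating by powers of g shows
       that y is linear of slope (slope y) near alpha and linear of some slope l' < 1 near p;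
       a power of g carries a piece near alpha affinely into the piece near p, and
       commuting y through it forces slope y = l', which is impossible.
   A group of bijections embedded in the positive reals with a gap above 1 is cyclic,
   generated by the element of least slope above 1.
   The file proves this criterion first (locale slope_group), then develops F(r,Lambda,A)
   with breakpoints given as a finite set (locale pl_group), then the dynamics of x and the
   steps (1)-(4) (locale centralizer_setting); the theorem is the final instance. *)

lemma affine_fixing_two_points:
  fixes a b l c :: real
  assumes "l * a + c = a" "l * b + c = b" "a \<noteq> b"
  shows "l = 1" "c = 0"
proof -
  have "l * (b - a) = b - a" using assms by (simp add: algebra_simps)
  then show "l = 1" using assms(3) by simp
  then show "c = 0" using assms(1) by simp
qed

lemma funpow_commute: "(\<And>t. y (h t) = h (y t)) \<Longrightarrow> y ((h ^^ n) t) = (h ^^ n) (y t)"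
  by (induction n) auto

lemma inv_commute:
  assumes "bij g" "\<And>t. y (g t) = g (y t)"
  shows "y (inv g t) = inv g (y t)"
proof -
  have "y t = g (y (inv g t))" using assms(2)[of "inv g t"] assms(1) by (simp add: bij_is_surj surj_f_inv_f)
  then show ?thesis using assms(1) by (metis bij_is_inj inv_f_f)
qed

section \<open>A cyclicity criterion\<close>

locale slope_group =
  fixes C :: "(real \<Rightarrow> real) set" and \<sigma> :: "(real \<Rightarrow> real) \<Rightarrow> real" and \<Delta> :: real
  assumes id_mem: "id \<in> C"
    and comp_mem: "y \<in> C \<Longrightarrow> z \<in> C \<Longrightarrow> y \<circ> z \<in> C"
    and inv_mem: "y \<in> C \<Longrightarrow> inv y \<in> C"
    and bij_mem: "y \<in> C \<Longrightarrow> bij y"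
    and pos: "y \<in> C \<Longrightarrow> \<sigma> y > 0"
    and hom: "y \<in> C \<Longrightarrow> z \<in> C \<Longrightarrow> \<sigma> (y \<circ> z) = \<sigma> y * \<sigma> z"
    and kernel: "y \<in> C \<Longrightarrow> \<sigma> y = 1 \<Longrightarrow> y = id"
    and gap: "\<Delta> > 1" "y \<in> C \<Longrightarrow> \<not> (1 < \<sigma> y \<and> \<sigma> y \<le> \<Delta>)"
begin

lemma sigma_id: "\<sigma> id = 1"
  using hom[OF id_mem id_mem] pos[OF id_mem] by simp

lemma sigma_inv: assumes "y \<in> C" shows "\<sigma> (inv y) = inverse (\<sigma> y)"
proof -
  have "y \<circ> inv y = id" using bij_is_surj[OF bij_mem[OF assms]] surj_iff by blast
  then have "\<sigma> y * \<sigma> (inv y) = 1" using hom[OF assms inv_mem[OF assms]] sigma_id by simp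
  then show ?thesis using pos[OF assms] by (simp add: field_simps)
qed

lemma sigma_quotient: "y \<in> C \<Longrightarrow> z \<in> C \<Longrightarrow> y \<circ> inv z \<in> C \<and> \<sigma> (y \<circ> inv z) = \<sigma> y / \<sigma> z"
  using comp_mem inv_mem hom sigma_inv by (simp add: divide_inverse)

lemma eq_of_sigma_eq:
  assumes "y \<in> C" "z \<in> C" "\<sigma> y = \<sigma> z"
  shows "y = z"
proof -
  have "y \<circ> inv z = id" using kernel sigma_quotient[OF assms(1,2)] assms(3) pos[OF assms(2)] by simp
  then have "y (inv z (z t)) = z t" for t by (metis comp_apply id_apply)
  then show ?thesis using bij_mem[OF assms(2)] by (simp add: fun_eq_iff bij_is_inj)
qed

lemma funpow_mem: assumes "z \<in> C" shows "z ^^ n \<in> C \<and> \<sigma> (z ^^ n) = \<sigma> z ^ n"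
proof (induction n)
  case 0 then show ?case using id_mem sigma_id by (simp add: id_def)
next
  case (Suc n)
  then have "z \<circ> z ^^ n \<in> C" "\<sigma> (z \<circ> z ^^ n) = \<sigma> z ^ Suc n"
    using comp_mem[OF assms] hom[OF assms] by auto
  then show ?case by (simp only: funpow.simps(2))
qed

lemma fpow_mem: assumes "z \<in> C" shows "fpow z k \<in> C \<and> \<sigma> (fpow z k) = \<sigma> z powr real_of_int k"
proof (cases "0 \<le> k")
  case True
  then show ?thesis using funpow_mem[OF assms, of "nat k"] pos[OF assms]
    by (simp add: fpow_def powr_realpow[symmetric])
next
  case False
  then have e: "real_of_int k = - real (nat (-k))" by simp
  have "\<sigma> z powr real_of_int k = inverse (\<sigma> z powr real (nat (-k)))" unfolding e by (rule powr_minus)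
  also have "\<dots> = inverse (\<sigma> z) ^ nat (-k)"
    using pos[OF assms] by (simp add: powr_realpow power_inverse)
  finally have "\<sigma> z powr real_of_int k = inverse (\<sigma> z) ^ nat (-k)" .
  then show ?thesis using funpow_mem[OF inv_mem[OF assms], of "nat (-k)"] False sigma_inv[OF assms]
    by (simp add: fpow_def)
qed

text \<open>The slopes above 1 have a least element (they are bounded below by Delta, and two
  of them cannot have ratio in (1, Delta]).\<close>
lemma least_slope_above_one:
  assumes "y0 \<in> C" "\<sigma> y0 > 1"
  obtains g where "g \<in> C" "\<sigma> g > 1" "\<And>y. y \<in> C \<Longrightarrow> \<sigma> y > 1 \<Longrightarrow> \<sigma> g \<le> \<sigma> y"
proof -
  define M where "M = \<sigma> ` {y\<in>C. \<sigma> y > 1}"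
  have Mne: "M \<noteq> {}" unfolding M_def using assms by blast
  have Mgt: "s \<in> M \<Longrightarrow> \<Delta> < s" for s unfolding M_def using gap by force
  have bdd: "bdd_below M" using Mgt by (meson bdd_belowI less_imp_le)
  define m where "m = Inf M"
  have mle: "s \<in> M \<Longrightarrow> m \<le> s" for s unfolding m_def using cInf_lower bdd by blast
  have m1: "m > 1" using gap(1) Mne Mgt unfolding m_def by (meson cInf_greatest less_imp_le less_le_trans)
  have ratio: "\<not> (s2 < s1 \<and> s1 \<le> s2 * \<Delta>)" if s12: "s1 \<in> M" "s2 \<in> M" for s1 s2
  proof
    assume s: "s2 < s1 \<and> s1 \<le> s2 * \<Delta>"
    obtain y1 y2 where y: "y1 \<in> C" "\<sigma> y1 = s1" "y2 \<in> C" "\<sigma> y2 = s2" using s12 unfolding M_def by blast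
    have "s2 > 0" using Mgt[OF s12(2)] gap(1) by simp
    then have "1 < s1 / s2 \<and> s1 / s2 \<le> \<Delta>" using s by (simp add: field_simps)
    then show False using gap(2)[of "y1 \<circ> inv y2"] sigma_quotient[OF y(1,3)] y by simp
  qed
  have "m \<in> M"
  proof (rule ccontr)
    assume nm: "m \<notin> M"
    have "m < m * \<Delta>" using m1 gap(1) by simp
    then obtain s1 where s1: "s1 \<in> M" "s1 < m * \<Delta>" using cInf_less_iff[OF Mne bdd] unfolding m_def by blast
    have "m < s1" using mle[OF s1(1)] nm s1(1) by (cases "m = s1") auto
    then obtain s2 where s2: "s2 \<in> M" "s2 < s1" using cInf_less_iff[OF Mne bdd] unfolding m_def by blast
    have "m \<le> s2" using mle[OF s2(1)] .
    then have "m * \<Delta> \<le> s2 * \<Delta>" using gap(1) by simp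
    then show False using ratio[OF s1(1) s2(1)] s1 s2 by simp
  qed
  then show ?thesis using that mle unfolding M_def by fastforce
qed

text \<open>If some slope exceeds 1, the element g of least slope above 1 generates C: dividing
  y by a suitable power w of g leaves a slope in [1, slope g), hence slope 1.\<close>
lemma generated_by_least_slope:
  assumes g: "g \<in> C" "\<sigma> g > 1" "\<And>y. y \<in> C \<Longrightarrow> \<sigma> y > 1 \<Longrightarrow> \<sigma> g \<le> \<sigma> y"
  shows "C = range (fpow g)"
proof -
  have "y \<in> range (fpow g)" if y: "y \<in> C" for y
  proof -
    define k where "k = \<lfloor>log (\<sigma> g) (\<sigma> y)\<rfloor>"
    define w where "w = fpow g k"
    have w: "w \<in> C" "\<sigma> w = \<sigma> g powr real_of_int k" using fpow_mem[OF g(1)] unfolding w_def by auto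
    have "\<sigma> g powr real_of_int k \<le> \<sigma> y" "\<sigma> y < \<sigma> g powr (real_of_int k + 1)"
      using powr_mono[of "real_of_int k" "log (\<sigma> g) (\<sigma> y)" "\<sigma> g"]
        powr_less_mono[of "log (\<sigma> g) (\<sigma> y)" "real_of_int k + 1" "\<sigma> g"] g(2) pos[OF y]
      unfolding k_def by auto
    then have "1 \<le> \<sigma> y / \<sigma> w" "\<sigma> y / \<sigma> w < \<sigma> g"
      using w(2) g(2) by (auto simp: powr_add field_simps)
    then have "\<sigma> (y \<circ> inv w) = 1" using g(3) sigma_quotient[OF y w(1)] by force
    then have "\<sigma> y = \<sigma> w" using sigma_quotient[OF y w(1)] pos[OF w(1)] by simp
    then show ?thesis using eq_of_sigma_eq[OF y w(1)] unfolding w_def by blast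
  qed
  then show ?thesis using fpow_mem[OF g(1)] by blast
qed

text \<open>Otherwise all slopes are 1 (slopes of inverses are inverse), and C is trivial.\<close>
lemma trivial_if_no_slope_above_one:
  assumes "\<forall>y\<in>C. \<sigma> y \<le> 1"
  shows "C = range (fpow id)"
proof -
  have "y = id" if y: "y \<in> C" for y
  proof -
    have "\<sigma> (inv y) \<le> 1" "\<sigma> y \<le> 1" using assms y inv_mem by auto
    then have "\<sigma> y = 1" using sigma_inv[OF y] pos[OF y] by (simp add: inverse_le_1_iff)
    then show ?thesis using kernel y by blast
  qed
  moreover have "fpow id k = id" for k
  proof -
    have "fpow id k \<in> C" "\<sigma> (fpow id k) = 1" using fpow_mem[OF id_mem, of k] sigma_id by simp_all
    then show ?thesis using kernel by blast
  qed
  ultimately show ?thesis using id_mem by auto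
qed

theorem cyclic: "cyclic_fun_group C"
proof (cases "\<exists>y\<in>C. \<sigma> y > 1")
  case True
  then obtain g where "g \<in> C" "\<sigma> g > 1" "\<And>y. y \<in> C \<Longrightarrow> \<sigma> y > 1 \<Longrightarrow> \<sigma> g \<le> \<sigma> y"
    using least_slope_above_one by blast
  then show ?thesis unfolding cyclic_fun_group_def using generated_by_least_slope by blast
next
  case False
  then show ?thesis unfolding cyclic_fun_group_def using trivial_if_no_slope_above_one by (auto simp: not_less)
qed

end

lemma additive_subgroup_dense:
  fixes A :: "real set"
  assumes add: "\<And>a b. a \<in> A \<Longrightarrow> b \<in> A \<Longrightarrow> a + b \<in> A" and neg: "\<And>a. a \<in> A \<Longrightarrow> - a \<in> A"
    and zero: "0 \<in> A" and small: "\<And>e. e > 0 \<Longrightarrow> \<exists>h\<in>A. 0 < h \<and> h < e" and "a < b"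
  shows "\<exists>t\<in>A. a < t \<and> t < b"
proof -
  obtain h where h: "h \<in> A" "0 < h" "h < b - a" using small[of "b - a"] \<open>a < b\<close> by auto
  have nat_mult: "real n * h \<in> A" for n by (induction n) (simp_all add: zero distrib_right add[OF h(1)])
  have int_mult: "real_of_int k * h \<in> A" for k
    using nat_mult[of "nat k"] neg[OF nat_mult[of "nat (-k)"]] by (cases "0 \<le> k") auto
  define k where "k = \<lfloor>a / h\<rfloor> + 1"
  have "a / h < real_of_int k" "real_of_int k \<le> a / h + 1" unfolding k_def by linarith+
  then have "a < real_of_int k * h" "real_of_int k * h \<le> a + h" using h(2) by (simp_all add: field_simps)
  then show ?thesis using int_mult[of k] h(3) by force
qed

lemma chain_less:
  fixes a :: "nat \<Rightarrow> real"
  assumes "\<forall>i<n. a i < a (Suc i)" "i < j" "j \<le> n"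
  shows "a i < a j"
  using assms(2,3)
proof (induction j)
  case (Suc j)
  show ?case
  proof (cases "i = j")
    case True then show ?thesis using assms(1) Suc.prems by simp
  next
    case False
    then have "a i < a j" using Suc by simp
    also have "a j < a (Suc j)" using assms(1) Suc.prems by simp
    finally show ?thesis .
  qed
qed simp

lemma subdivision_cell:
  fixes a :: "nat \<Rightarrow> real"
  assumes "a 0 = 0" "a n = r" "\<forall>i<n. a i < a (Suc i)" "0 \<le> u" "u < v" "v \<le> r"
    and gap: "\<forall>i<n. a i \<le> u \<or> v \<le> a i"
  obtains i where "i < n" "a i \<le> u" "v \<le> a (Suc i)"
proof -
  have n0: "n > 0" using assms(1,2,4,5,6) by (cases n) auto
  define i where "i = Max {i. i < n \<and> a i \<le> u}"
  have "i \<in> {i. i < n \<and> a i \<le> u}" unfolding i_def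
    by (rule Max_in) (use n0 assms(1,4) in auto)
  then have i: "i < n" "a i \<le> u" by auto
  have imax: "\<And>j. j < n \<Longrightarrow> a j \<le> u \<Longrightarrow> j \<le> i" unfolding i_def by (rule Max_ge) auto
  have "v \<le> a (Suc i)"
  proof (cases "Suc i < n")
    case True then show ?thesis using imax[of "Suc i"] gap by force
  next
    case False then have "Suc i = n" using i(1) by simp
    then show ?thesis using assms(2,6) by simp
  qed
  then show ?thesis using that i by blast
qed

lemma finite_set_subdivision:
  fixes S :: "real set"
  assumes "finite S" "0 \<in> S" "S \<subseteq> {0..<r}"
  obtains n a where "a 0 = 0" "a n = r" "\<forall>i<n. a i < a (Suc i)" "a ` {..<n} = S"
proof -
  define xs where "xs = sorted_list_of_set S"
  define n where "n = length xs"
  have setxs: "set xs = S" and sxs: "sorted_wrt (<) xs" unfolding xs_def using assms(1) by auto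
  define a where "a = (\<lambda>i. if i < n then xs ! i else r)"
  have "a ` {..<n} = nth xs ` {0..<n}" unfolding a_def by (auto simp: lessThan_atLeast0)
  also have "\<dots> = S" using setxs nth_image[of n xs] unfolding n_def by simp
  finally have img: "a ` {..<n} = S" .
  have asc: "\<forall>i<n. a i < a (Suc i)"
  proof (intro allI impI)
    fix i assume i: "i < n"
    show "a i < a (Suc i)"
    proof (cases "Suc i < n")
      case True then show ?thesis using sorted_wrt_nth_less[OF sxs, of i "Suc i"] unfolding a_def n_def by simp
    next
      case False then show ?thesis using img i assms(3) unfolding a_def by auto
    qed
  qed
  obtain j where j: "j < n" "a j = 0" using img assms(2) by (metis imageE lessThan_iff)
  moreover have "0 \<le> a 0" using img assms(3) j(1) by force
  ultimately have "a 0 = 0" using chain_less[OF asc, of 0 j] by (cases "j = 0") auto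
  moreover have "a n = r" unfolding a_def by simp
  ultimately show ?thesis using that[OF _ _ asc img] by blast
qed

lemma breakpoint_gap_right:
  fixes S :: "real set"
  assumes "finite S" "0 \<in> S" "S \<subseteq> {0..<r}" "0 \<le> t" "t < r"
  obtains u v where "u \<in> S" "u \<le> t" "t < v" "v \<le> r" "\<forall>s\<in>S. s \<le> u \<or> v \<le> s"
proof -
  define u where "u = Max {s\<in>S. s \<le> t}"
  define v where "v = Min (insert r {s\<in>S. t < s})"
  have u: "u \<in> {s\<in>S. s \<le> t}" unfolding u_def by (rule Max_in) (use assms in auto)
  have v: "v \<in> insert r {s\<in>S. t < s}" unfolding v_def by (rule Min_in) (use assms in auto)
  show ?thesis
  proof (rule that)
    show "u \<in> S" "u \<le> t" "t < v" using u v assms(5) by auto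
    show "v \<le> r" unfolding v_def using assms(1) by simp
    show "\<forall>s\<in>S. s \<le> u \<or> v \<le> s"
    proof
      fix s assume s: "s \<in> S"
      show "s \<le> u \<or> v \<le> s"
      proof (cases "s \<le> t")
        case True then show ?thesis unfolding u_def using assms(1) s by (intro disjI1 Max_ge) auto
      next
        case False then show ?thesis unfolding v_def using assms(1) s by (intro disjI2 Min_le) auto
      qed
    qed
  qed
qed

lemma breakpoint_gap_left:
  fixes S :: "real set"
  assumes "finite S" "0 \<in> S" "0 < t"
  obtains u where "u \<in> S" "u < t" "\<forall>s\<in>S. s \<le> u \<or> t \<le> s"
proof -
  define u where "u = Max {s\<in>S. s < t}"
  have u: "u \<in> {s\<in>S. s < t}" unfolding u_def by (rule Max_in) (use assms in auto)
  show ?thesis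
  proof (rule that)
    show "u \<in> S" "u < t" using u by auto
    show "\<forall>s\<in>S. s \<le> u \<or> t \<le> s" unfolding u_def using assms(1) by (auto intro: Max_ge)
  qed
qed

section \<open>The group F(r, Lambda, A)\<close>

text \<open>The standing parameters, and a description of F in which the breakpoints form a finite
  set S rather than an enumerated subdivision: this makes composition and inversion easy.\<close>
locale pl_group =
  fixes r :: real and L A :: "real set"
  assumes std: "std_params r L A"
begin

lemma r_pos: "r > 0" using std by (simp add: std_params_def)
lemma L_pos: "l \<in> L \<Longrightarrow> l > 0" using std by (auto simp add: std_params_def)
lemma L_one: "1 \<in> L" using std by (simp add: std_params_def)
lemma L_mult: "a \<in> L \<Longrightarrow> b \<in> L \<Longrightarrow> a * b \<in> L" using std by (simp add: std_params_def)
lemma L_inv: "a \<in> L \<Longrightarrow> inverse a \<in> L" using std by (simp add: std_params_def)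
lemma A_zero: "0 \<in> A" using std by (simp add: std_params_def)
lemma A_add: "a \<in> A \<Longrightarrow> b \<in> A \<Longrightarrow> a + b \<in> A" using std by (simp add: std_params_def)
lemma A_uminus: "a \<in> A \<Longrightarrow> - a \<in> A" using std by (simp add: std_params_def)
lemma A_diff: "a \<in> A \<Longrightarrow> b \<in> A \<Longrightarrow> a - b \<in> A" using A_add A_uminus by (metis diff_conv_add_uminus)
lemma A_Lmult: "l \<in> L \<Longrightarrow> a \<in> A \<Longrightarrow> l * a \<in> A" using std by (simp add: std_params_def)

text \<open>A is dense: since Lambda is nontrivial, it contains some q < 1, and q^n r lies in A.\<close>
lemma A_dense: assumes "a < b" shows "\<exists>t\<in>A. a < t \<and> t < b"
proof (rule additive_subgroup_dense[OF A_add A_uminus A_zero _ assms])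
  fix e :: real assume e: "e > 0"
  obtain l where l: "l \<in> L" "l \<noteq> 1" using std L_one unfolding std_params_def by blast
  define q where "q = (if l < 1 then l else inverse l)"
  have q: "q \<in> L" "0 < q" "q < 1"
    using l L_inv L_pos[of l] by (auto simp: q_def inverse_less_1_iff)
  have qn: "q ^ n \<in> L" for n by (induction n) (auto simp: L_one L_mult q(1))
  obtain n where "q ^ n < e / r" using real_arch_pow_inv[of "e / r" q] q e r_pos by auto
  then have "q ^ n * r < e" using r_pos by (simp add: field_simps)
  moreover have "q ^ n * r \<in> A" using A_Lmult[OF qn] std by (simp add: std_params_def)
  ultimately show "\<exists>h\<in>A. 0 < h \<and> h < e" using q r_pos by (intro bexI[of _ "q ^ n * r"]) auto
qed

definition affine_on :: "(real \<Rightarrow> real) \<Rightarrow> real set \<Rightarrow> bool" where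
  "affine_on f S \<longleftrightarrow> (\<exists>l\<in>L. \<exists>c. \<forall>t\<in>S. f t = l * t + c)"

definition pieces_affine :: "real set \<Rightarrow> (real \<Rightarrow> real) \<Rightarrow> bool" where
  "pieces_affine S f \<longleftrightarrow>
     (\<forall>u v. 0 \<le> u \<longrightarrow> u < v \<longrightarrow> v \<le> r \<longrightarrow> (\<forall>s\<in>S. s \<le> u \<or> v \<le> s) \<longrightarrow> affine_on f {u..<v})"

definition is_pl :: "(real \<Rightarrow> real) \<Rightarrow> bool" where
  "is_pl f \<longleftrightarrow> (\<exists>g. homeomorphism {0..<r} {0..<r} f g) \<and> (\<forall>t. t \<notin> {0..<r} \<longrightarrow> f t = t) \<and>
     (\<exists>S. finite S \<and> S \<subseteq> A \<inter> {0..<r} \<and> 0 \<in> S \<and> f ` S \<subseteq> A \<and> pieces_affine S f)"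

lemma PLF_imp_pl: assumes "f \<in> PLF r L A" shows "is_pl f"
proof -
  from assms obtain n a where h: "\<exists>g. homeomorphism {0..<r} {0..<r} f g"
    "\<forall>t. t \<notin> {0..<r} \<longrightarrow> f t = t" "a 0 = 0" "a n = r" "\<forall>i<n. a i < a (Suc i)"
    "\<forall>i<n. a i \<in> A \<and> f (a i) \<in> A \<and> (\<exists>l\<in>L. \<exists>c. \<forall>t\<in>{a i..<a (Suc i)}. f t = l * t + c)"
    unfolding PLF_def by blast
  have n0: "n > 0" using h(3,4) r_pos by (cases n) auto
  have "0 \<le> a i \<and> a i < r" if "i < n" for i
    using chain_less[OF h(5), of 0 i] chain_less[OF h(5), of i n] h(3,4) that by (cases "i = 0") auto
  then have "a ` {..<n} \<subseteq> A \<inter> {0..<r}" "f ` a ` {..<n} \<subseteq> A" using h(6) by auto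
  moreover have "pieces_affine (a ` {..<n}) f" unfolding pieces_affine_def
  proof (intro allI impI)
    fix u v assume uv: "0 \<le> u" "u < v" "v \<le> r" "\<forall>s\<in>a ` {..<n}. s \<le> u \<or> v \<le> s"
    then obtain i where "i < n" "a i \<le> u" "v \<le> a (Suc i)"
      using subdivision_cell[OF h(3,4,5)] by blast
    then show "affine_on f {u..<v}" unfolding affine_on_def using h(6) by force
  qed
  moreover have "0 \<in> a ` {..<n}" using n0 h(3) by force
  ultimately show ?thesis unfolding is_pl_def using h(1,2) by blast
qed

lemma pl_imp_PLF: assumes "is_pl f" shows "f \<in> PLF r L A"
proof -
  from assms obtain S where h: "\<exists>g. homeomorphism {0..<r} {0..<r} f g"
    "\<forall>t. t \<notin> {0..<r} \<longrightarrow> f t = t" "finite S" "S \<subseteq> A \<inter> {0..<r}" "0 \<in> S" "f ` S \<subseteq> A"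
    "pieces_affine S f"
    unfolding is_pl_def by blast
  obtain n a where a: "a 0 = 0" "a n = r" "\<forall>i<n. a i < a (Suc i)" "a ` {..<n} = S"
    using finite_set_subdivision[OF h(3,5)] h(4) by blast
  have pieces: "\<exists>l\<in>L. \<exists>c. \<forall>t\<in>{a i..<a (Suc i)}. f t = l * t + c" if i: "i < n" for i
  proof -
    have "a j \<le> a i \<or> a (Suc i) \<le> a j" if j: "j < n" for j
    proof (cases "j \<le> i")
      case True then show ?thesis using chain_less[OF a(3), of j i] i by (cases "j = i") auto
    next
      case False then have "Suc i \<le> j" by simp
      then show ?thesis using chain_less[OF a(3), of "Suc i" j] j by (cases "Suc i = j") auto
    qed
    then have "\<forall>s\<in>S. s \<le> a i \<or> a (Suc i) \<le> s" using a(4) by blast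
    moreover have "0 \<le> a i" "a (Suc i) \<le> r"
      using a(4) h(4) i chain_less[OF a(3), of "Suc i" n] a(2) by (force, cases "Suc i = n", auto)
    ultimately show ?thesis using h(7) a(3) i unfolding pieces_affine_def affine_on_def by blast
  qed
  have "\<forall>i<n. a i \<in> A \<and> f (a i) \<in> A \<and> (\<exists>l\<in>L. \<exists>c. \<forall>t\<in>{a i..<a (Suc i)}. f t = l * t + c)"
  proof (intro allI impI conjI)
    fix i assume i: "i < n"
    then have "a i \<in> S" using a(4) by blast
    then show "a i \<in> A" "f (a i) \<in> A" using h(4,6) by auto
    show "\<exists>l\<in>L. \<exists>c. \<forall>t\<in>{a i..<a (Suc i)}. f t = l * t + c" using pieces[OF i] .
  qed
  then have "\<exists>(n::nat) a. a 0 = 0 \<and> a n = r \<and> (\<forall>i<n. a i < a (Suc i)) \<and>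
      (\<forall>i<n. a i \<in> A \<and> f (a i) \<in> A \<and> (\<exists>l\<in>L. \<exists>c. \<forall>t\<in>{a i..<a (Suc i)}. f t = l * t + c))"
    using a(1,2,3) by blast
  then show ?thesis unfolding PLF_def mem_Collect_eq using h(1,2) by (intro conjI)
qed

lemma PLF_iff_pl: "f \<in> PLF r L A \<longleftrightarrow> is_pl f" using PLF_imp_pl pl_imp_PLF by blast

lemma pl_homeomorphism:
  assumes "is_pl f"
  obtains g where "homeomorphism {0..<r} {0..<r} f g"
  using assms unfolding is_pl_def by blast

lemma pl_breakpoints:
  assumes "is_pl f"
  obtains S where "finite S" "S \<subseteq> A \<inter> {0..<r}" "0 \<in> S" "f ` S \<subseteq> A" "pieces_affine S f"
  using assms unfolding is_pl_def by blast

lemma pl_piece: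
  assumes "is_pl f" "0 \<le> t" "t < r"
  obtains u v l c where "u \<in> A" "f u \<in> A" "u \<le> t" "t < v" "v \<le> r" "l \<in> L"
    "\<forall>w\<in>{u..<v}. f w = l * w + c" "t \<notin> A \<Longrightarrow> u < t"
proof -
  obtain S where h: "finite S" "S \<subseteq> A \<inter> {0..<r}" "0 \<in> S" "f ` S \<subseteq> A" "pieces_affine S f"
    by (rule pl_breakpoints[OF assms(1)])
  obtain u v where uv: "u \<in> S" "u \<le> t" "t < v" "v \<le> r" "\<forall>s\<in>S. s \<le> u \<or> v \<le> s"
    using breakpoint_gap_right[OF h(1,3) _ assms(2,3)] h(2) by blast
  have "affine_on f {u..<v}" using h(5) uv h(2) unfolding pieces_affine_def by force
  then obtain l c where "l \<in> L" "\<forall>w\<in>{u..<v}. f w = l * w + c" unfolding affine_on_def by blast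
  moreover have "t \<notin> A \<Longrightarrow> u < t" using uv h(2) by (auto simp: order_le_less)
  ultimately show ?thesis using that[of u v l c] uv h(2,4) by blast
qed

lemma pl_right_germ:
  assumes "is_pl f" "0 \<le> t" "t < r"
  shows "\<exists>d>0. \<exists>l\<in>L. \<exists>c. \<forall>w\<in>{t..t+d}. f w = l * w + c"
proof -
  obtain u v l c where h: "u \<le> t" "t < v" "l \<in> L" "\<forall>w\<in>{u..<v}. f w = l * w + c"
    using pl_piece[OF assms] by metis
  have "{t..t+(v-t)/2} \<subseteq> {u..<v}" using h(1,2) by (auto simp: field_simps)
  then have "\<forall>w\<in>{t..t+(v-t)/2}. f w = l * w + c" using h(4) by blast
  moreover have "(v-t)/2 > 0" using h(2) by simp
  ultimately show ?thesis using h(3) by blast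
qed

text \<open>At a point outside A no breakpoint occurs: the element is affine on both sides.\<close>
lemma pl_twosided_germ:
  assumes "is_pl f" "0 < t" "t < r" "t \<notin> A"
  shows "\<exists>d>0. \<exists>l\<in>L. \<exists>c. \<forall>w\<in>{t-d..t+d}. f w = l * w + c"
proof -
  obtain u v l c where h: "u < t" "t < v" "l \<in> L" "\<forall>w\<in>{u..<v}. f w = l * w + c"
    using pl_piece[OF assms(1) _ assms(3)] assms(2,4) by (metis less_imp_le)
  define d where "d = min (t-u) (v-t)/2"
  have "{t-d..t+d} \<subseteq> {u..<v}" using h(1,2) unfolding d_def by (auto simp: min_def field_simps)
  then have "\<forall>w\<in>{t-d..t+d}. f w = l * w + c" using h(4) by blast
  moreover have "d > 0" using h(1,2) unfolding d_def by simp
  ultimately show ?thesis using h(3) by blast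
qed

lemma pl_basic:
  assumes "is_pl f"
  shows "continuous_on {0..<r} f" "f ` {0..<r} = {0..<r}" "\<And>t. t \<notin> {0..<r} \<Longrightarrow> f t = t"
    "inj_on f {0..<r}"
proof -
  obtain g where h: "homeomorphism {0..<r} {0..<r} f g" by (rule pl_homeomorphism[OF assms])
  then show "continuous_on {0..<r} f" "f ` {0..<r} = {0..<r}" unfolding homeomorphism_def by auto
  show "\<And>t. t \<notin> {0..<r} \<Longrightarrow> f t = t" using assms unfolding is_pl_def by blast
  show "inj_on f {0..<r}" using homeomorphism_apply1[OF h] by (intro inj_on_inverseI[of _ g])
qed

text \<open>Elements are increasing: a continuous injection of [0,r) which has a positive slope
  at each point is increasing.\<close>
lemma pl_mono_inside:
  assumes "is_pl f" "0 \<le> u" "u < v" "v < r"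
  shows "f u < f v"
proof -
  obtain d l c where g: "d > 0" "l \<in> L" "\<forall>w\<in>{u..u+d}. f w = l * w + c"
    using pl_right_germ[OF assms(1,2)] assms by force
  define w where "w = min (u + d) ((u+v)/2)"
  have w: "u < w" "w < v" unfolding w_def using g assms by (auto simp: min_def)
  have sub: "{u..v} \<subseteq> {0..<r}" using assms by auto
  have "continuous_on {u..v} f" by (rule continuous_on_subset[OF pl_basic(1)[OF assms(1)] sub])
  moreover have "inj_on f {u..v}" by (rule inj_on_subset[OF pl_basic(4)[OF assms(1)] sub])
  ultimately have "(f u < f w \<and> f w < f v) \<or> (f v < f w \<and> f w < f u)"
    using continuous_inj_imp_mono[OF w] by blast
  moreover have "f u < f w" using g w L_pos[of l] unfolding w_def by auto
  ultimately show ?thesis by auto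
qed

text \<open>Outside [0,r) elements are the identity, so they are increasing on the whole line.\<close>
lemma pl_mono:
  assumes "is_pl f" "u < v"
  shows "f u < f v"
proof (cases "0 \<le> u \<and> v < r")
  case True then show ?thesis using pl_mono_inside[OF assms(1)] assms(2) by blast
next
  case False
  have into: "t \<in> {0..<r} \<Longrightarrow> f t \<in> {0..<r}" for t using pl_basic(2)[OF assms(1)] by blast
  show ?thesis using False into[of u] into[of v] pl_basic(3)[OF assms(1), of u] pl_basic(3)[OF assms(1), of v] assms(2)
    by (cases "u \<in> {0..<r}"; cases "v \<in> {0..<r}") auto
qed

lemma pl_less_iff: assumes "is_pl f" shows "f u < f v \<longleftrightarrow> u < v"
proof
  assume "f u < f v"
  moreover have "f v < f u" if "v < u" using pl_mono[OF assms that] .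
  ultimately show "u < v" by (cases u v rule: linorder_cases) auto
qed (rule pl_mono[OF assms])

lemma pl_le_iff: "is_pl f \<Longrightarrow> f u \<le> f v \<longleftrightarrow> u \<le> v"
  using pl_less_iff[of f v u] by (simp add: not_less[symmetric])

text \<open>Elements fix 0, the least point of [0,r).\<close>
lemma pl_zero: assumes "is_pl f" shows "f 0 = 0"
proof -
  have "0 \<in> f ` {0..<r}" using pl_basic(2)[OF assms] r_pos by simp
  then obtain w where w: "0 \<le> w" "f w = 0" by auto
  have "f 0 \<in> f ` {0..<r}" using r_pos by simp
  then have "0 \<le> f 0" using pl_basic(2)[OF assms] by simp
  moreover have "f 0 \<le> f w" using pl_le_iff[OF assms] w(1) by blast
  ultimately show ?thesis using w(2) by simp
qed

lemma pl_piece_closed: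
  assumes f: "is_pl f" and "0 \<le> u" "u < t" "t \<le> r" "l > 0" and piece: "\<forall>w\<in>{u..<t}. f w = l * w + c"
  shows "f t = l * t + c"
proof (rule antisym)
  have fu: "f u < l * t + c" using piece assms(3,5) by simp
  show "f t \<le> l * t + c"
  proof (rule ccontr)
    txt \<open>Values strictly between l t + c and f t would be missed by f.\<close>
    assume "\<not> ?thesis"
    define z where "z = (l * t + c + f t) / 2"
    have z: "l * t + c < z" "z < f t" unfolding z_def using \<open>\<not> _\<close> by auto
    have "f t \<le> r" using pl_le_iff[OF f, of t r] assms(4) pl_basic(3)[OF f, of r] by simp
    moreover have "0 \<le> f u" using pl_le_iff[OF f, of 0 u] pl_zero[OF f] assms(2) by simp
    ultimately have "z \<in> f ` {0..<r}" using pl_basic(2)[OF f] z fu by simp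
    then obtain w where w: "f w = z" by blast
    have "w < t" using z w pl_le_iff[OF f, of t w] by simp
    moreover have "\<not> w < u"
    proof
      assume "w < u"
      then have "f w < f u" using pl_less_iff[OF f, of w u] by simp
      then show False using w z fu by simp
    qed
    ultimately have "f w = l * w + c" "l * w < l * t" using piece assms(5) by simp_all
    then show False using w z by simp
  qed
  show "l * t + c \<le> f t"
  proof (rule dense_le_bounded[of "l * u + c"])
    show "l * u + c < l * t + c" using assms by simp
  next
    txt \<open>Every value in (l u + c, l t + c) is taken on [u,t), below f t.\<close>
    fix z assume z: "l * u + c < z" "z < l * t + c"
    define w where "w = (z - c) / l"
    have "u < w" "w < t" "f w = z" using z assms(5) piece unfolding w_def by (auto simp: field_simps)
    then show "z \<le> f t" using pl_less_iff[OF f, of w t] by simp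
  qed
qed

lemma pl_left_germ:
  assumes "is_pl f" "0 < t" "t \<le> r"
  shows "\<exists>d>0. \<exists>l\<in>L. \<exists>c. \<forall>w\<in>{t-d..t}. f w = l * w + c"
proof -
  obtain S where h: "finite S" "S \<subseteq> A \<inter> {0..<r}" "0 \<in> S" "f ` S \<subseteq> A" "pieces_affine S f"
    by (rule pl_breakpoints[OF assms(1)])
  obtain u where u: "u \<in> S" "u < t" "\<forall>s\<in>S. s \<le> u \<or> t \<le> s"
    using breakpoint_gap_left[OF h(1,3) assms(2)] by blast
  have u0: "0 \<le> u" using u h(2) by auto
  have "affine_on f {u..<t}" using h(5) u u0 assms(3) unfolding pieces_affine_def by blast
  then obtain l c where lc: "l \<in> L" "\<forall>w\<in>{u..<t}. f w = l * w + c" unfolding affine_on_def by blast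
  have "f t = l * t + c" using pl_piece_closed[OF assms(1) u0 u(2) assms(3) L_pos[OF lc(1)] lc(2)] .
  then have "\<forall>w\<in>{u..t}. f w = l * w + c" using lc by (auto simp: order_le_less)
  then show ?thesis using u lc by (intro exI[of _ "t - u"]) auto
qed

lemma pl_right_germ_fixed:
  assumes "is_pl f" "0 \<le> c" "c < r" "f c = c"
  obtains \<delta> l where "\<delta> > 0" "l \<in> L" "\<forall>w\<in>{c..c+\<delta>}. f w = c + l * (w - c)"
proof -
  obtain \<delta> l k where h: "\<delta> > 0" "l \<in> L" "\<forall>w\<in>{c..c+\<delta>}. f w = l * w + k"
    using pl_right_germ[OF assms(1-3)] by blast
  then have "k = c - l * c" using assms(4) by force
  then show ?thesis using that h by (auto simp: algebra_simps)
qed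

lemma pl_left_germ_fixed:
  assumes "is_pl f" "0 < c" "c \<le> r" "f c = c"
  obtains \<delta> l where "\<delta> > 0" "l \<in> L" "\<forall>w\<in>{c-\<delta>..c}. f w = c + l * (w - c)"
proof -
  obtain \<delta> l k where h: "\<delta> > 0" "l \<in> L" "\<forall>w\<in>{c-\<delta>..c}. f w = l * w + k"
    using pl_left_germ[OF assms(1-3)] by blast
  then have "k = c - l * c" using assms(4) by force
  then show ?thesis using that h by (auto simp: algebra_simps)
qed

text \<open>Elements preserve A in both directions (affine pieces have slopes in Lambda and
  intercepts in A).\<close>
lemma pl_A:
  assumes "is_pl f"
  shows "t \<in> A \<longleftrightarrow> f t \<in> A"
proof (cases "t \<in> {0..<r}")
  case False then show ?thesis using pl_basic(3)[OF assms] by simp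
next
  case True
  then obtain u v l c where h: "u \<in> A" "f u \<in> A" "u \<le> t" "t < v" "l \<in> L" "\<forall>w\<in>{u..<v}. f w = l * w + c"
    using pl_piece[OF assms] by (metis atLeastLessThan_iff)
  have cA: "c \<in> A" using A_diff[OF h(2) A_Lmult[OF h(5,1)]] h by simp
  have ft: "f t = l * t + c" and lp: "l > 0" using h L_pos by auto
  then have "t = inverse l * (f t - c)" by (simp add: field_simps)
  then show ?thesis using ft A_add[OF A_Lmult[OF h(5)] cA] A_Lmult[OF L_inv[OF h(5)] A_diff[OF _ cA]] by metis
qed

lemma pl_bij: assumes "is_pl f" shows "bij f"
proof (rule bijI)
  show "inj f"
  proof (rule injI)
    fix u v assume "f u = f v"
    then show "u = v" using pl_less_iff[OF assms, of u v] pl_less_iff[OF assms, of v u]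
      by (cases u v rule: linorder_cases) auto
  qed
  have "z \<in> range f" for z
  proof (cases "z \<in> {0..<r}")
    case True then show ?thesis using pl_basic(2)[OF assms] by blast
  next
    case False then show ?thesis using pl_basic(3)[OF assms, of z] by (metis rangeI)
  qed
  then show "surj f" by blast
qed

lemma pl_inv_f: assumes "is_pl f" shows "inv f (f t) = t" "f (inv f t) = t"
  using pl_bij[OF assms] by (simp_all add: bij_def surj_f_inv_f)

lemma pl_inv_less_iff: assumes "is_pl f" shows "inv f u < inv f v \<longleftrightarrow> u < v"
  using pl_less_iff[OF assms, of "inv f u" "inv f v"] pl_inv_f(2)[OF assms] by simp

lemma pl_inv_le_iff: "is_pl f \<Longrightarrow> inv f u \<le> inv f v \<longleftrightarrow> u \<le> v"
  using pl_inv_less_iff[of f v u] by (simp add: not_less[symmetric])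

lemma pl_inv_range: assumes "is_pl f" shows "t \<in> {0..<r} \<longleftrightarrow> inv f t \<in> {0..<r}"
proof
  assume "t \<in> {0..<r}"
  then obtain w where "w \<in> {0..<r}" "t = f w" using pl_basic(2)[OF assms] by blast
  then show "inv f t \<in> {0..<r}" using pl_inv_f(1)[OF assms, of w] by simp
next
  assume "inv f t \<in> {0..<r}"
  then have "f (inv f t) \<in> f ` {0..<r}" by (rule imageI)
  then show "t \<in> {0..<r}" using pl_basic(2)[OF assms] pl_inv_f(2)[OF assms, of t] by simp
qed

lemma pieces_affine_comp:
  assumes f: "is_pl f" "pieces_affine Sf f" and g: "is_pl g" "pieces_affine Sg g"
  shows "pieces_affine (Sg \<union> inv g ` Sf) (f \<circ> g)"
  unfolding pieces_affine_def
proof (intro allI impI)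
  fix u v assume uv: "0 \<le> u" "u < v" "v \<le> r" "\<forall>s\<in>Sg \<union> inv g ` Sf. s \<le> u \<or> v \<le> s"
  have "affine_on g {u..<v}" using g(2) uv unfolding pieces_affine_def by blast
  then obtain l1 c1 where g1: "l1 \<in> L" "\<forall>w\<in>{u..<v}. g w = l1 * w + c1" unfolding affine_on_def by blast
  have "0 \<le> g u" using pl_le_iff[OF g(1), of 0 u] pl_zero[OF g(1)] uv by simp
  moreover have "g u < g v" "g v \<le> r"
    using pl_less_iff[OF g(1), of u v] pl_le_iff[OF g(1), of v r] pl_basic(3)[OF g(1), of r] uv by simp_all
  moreover have "\<forall>s\<in>Sf. s \<le> g u \<or> g v \<le> s"
  proof
    fix s assume "s \<in> Sf"
    then have "inv g s \<le> u \<or> v \<le> inv g s" using uv(4) by blast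
    then show "s \<le> g u \<or> g v \<le> s"
      using pl_le_iff[OF g(1), of "inv g s" u] pl_le_iff[OF g(1), of v "inv g s"] pl_inv_f(2)[OF g(1), of s] by simp
  qed
  ultimately have "affine_on f {g u..<g v}" using f(2) unfolding pieces_affine_def by blast
  then obtain l2 c2 where f2: "l2 \<in> L" "\<forall>z\<in>{g u..<g v}. f z = l2 * z + c2" unfolding affine_on_def by blast
  have "g t \<in> {g u..<g v}" if "t \<in> {u..<v}" for t
    using that pl_le_iff[OF g(1), of u t] pl_less_iff[OF g(1), of t v] by simp
  then have "\<forall>t\<in>{u..<v}. (f \<circ> g) t = (l2 * l1) * t + (l2 * c1 + c2)" using f2 g1 by (simp add: algebra_simps)
  then show "affine_on (f \<circ> g) {u..<v}" unfolding affine_on_def using L_mult[OF f2(1) g1(1)] by blast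
qed

lemma pieces_affine_inv:
  assumes f: "is_pl f" "pieces_affine S f"
  shows "pieces_affine (f ` S) (inv f)"
  unfolding pieces_affine_def
proof (intro allI impI)
  fix u v assume uv: "0 \<le> u" "u < v" "v \<le> r" "\<forall>s\<in>f ` S. s \<le> u \<or> v \<le> s"
  have "0 \<le> inv f u" using pl_inv_range[OF f(1), of u] uv by auto
  moreover have "inv f u < inv f v" using pl_inv_less_iff[OF f(1)] uv by simp
  moreover have "inv f v \<le> r" using pl_inv_range[OF f(1), of v] pl_basic(3)[OF f(1), of r] pl_inv_f[OF f(1), of r] uv
    by (cases "v = r") auto
  moreover have "\<forall>s\<in>S. s \<le> inv f u \<or> inv f v \<le> s"
  proof
    fix s assume "s \<in> S"
    then have "f s \<le> u \<or> v \<le> f s" using uv(4) by blast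
    then show "s \<le> inv f u \<or> inv f v \<le> s"
      using pl_inv_le_iff[OF f(1), of "f s" u] pl_inv_le_iff[OF f(1), of v "f s"] pl_inv_f(1)[OF f(1), of s] by simp
  qed
  ultimately have "affine_on f {inv f u..<inv f v}" using f(2) unfolding pieces_affine_def by blast
  then obtain l c where f1: "l \<in> L" "\<forall>w\<in>{inv f u..<inv f v}. f w = l * w + c" unfolding affine_on_def by blast
  have "inv f t = inverse l * t + (- c / l)" if "t \<in> {u..<v}" for t
  proof -
    have "inv f t \<in> {inv f u..<inv f v}"
      using that pl_inv_le_iff[OF f(1), of u t] pl_inv_less_iff[OF f(1), of t v] by simp
    then have "t = l * inv f t + c" using f1 pl_inv_f(2)[OF f(1)] by metis
    then show ?thesis using L_pos[OF f1(1)] by (simp add: field_simps)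
  qed
  then show "affine_on (inv f) {u..<v}" unfolding affine_on_def using L_inv[OF f1(1)] by blast
qed

lemma pl_comp: assumes f: "is_pl f" and g: "is_pl g" shows "is_pl (f \<circ> g)"
proof -
  obtain gf where hf: "homeomorphism {0..<r} {0..<r} f gf" by (rule pl_homeomorphism[OF f])
  obtain gg where hg: "homeomorphism {0..<r} {0..<r} g gg" by (rule pl_homeomorphism[OF g])
  obtain Sf where Sf: "finite Sf" "Sf \<subseteq> A \<inter> {0..<r}" "0 \<in> Sf" "f ` Sf \<subseteq> A" "pieces_affine Sf f"
    by (rule pl_breakpoints[OF f])
  obtain Sg where Sg: "finite Sg" "Sg \<subseteq> A \<inter> {0..<r}" "0 \<in> Sg" "g ` Sg \<subseteq> A" "pieces_affine Sg g"
    by (rule pl_breakpoints[OF g])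
  define T where "T = Sg \<union> inv g ` Sf"
  have "inv g s \<in> A \<inter> {0..<r}" if "s \<in> Sf" for s
    using that Sf(2) pl_A[OF g, of "inv g s"] pl_inv_range[OF g, of s] pl_inv_f(2)[OF g, of s] by auto
  then have T: "T \<subseteq> A \<inter> {0..<r}" unfolding T_def using Sg(2) by blast
  have "(f \<circ> g) t \<in> A" if "t \<in> T" for t using that T pl_A[OF g, of t] pl_A[OF f, of "g t"] by auto
  moreover have "\<forall>t. t \<notin> {0..<r} \<longrightarrow> (f \<circ> g) t = t" using pl_basic(3)[OF f] pl_basic(3)[OF g] by simp
  moreover have "finite T" "0 \<in> T" unfolding T_def using Sf(1) Sg(1,3) by simp_all
  ultimately show ?thesis unfolding is_pl_def
    using homeomorphism_compose[OF hg(1) hf(1)] pieces_affine_comp[OF f Sf(5) g Sg(5), folded T_def] T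
    by blast
qed

lemma pl_inv: assumes f: "is_pl f" shows "is_pl (inv f)"
proof -
  obtain gf where hf: "homeomorphism {0..<r} {0..<r} f gf" by (rule pl_homeomorphism[OF f])
  obtain S where S: "finite S" "S \<subseteq> A \<inter> {0..<r}" "0 \<in> S" "f ` S \<subseteq> A" "pieces_affine S f"
    by (rule pl_breakpoints[OF f])
  have "inv f z = gf z" if "z \<in> {0..<r}" for z
    using homeomorphism_apply2[OF hf(1) that] pl_inv_f(1)[OF f, of "gf z"] by simp
  then have "homeomorphism {0..<r} {0..<r} (inv f) f"
    by (intro homeomorphism_cong[OF homeomorphism_symD[OF hf(1)]]) auto
  moreover have "f ` S \<subseteq> A \<inter> {0..<r}" using S(2,4) pl_basic(2)[OF f] by blast
  moreover have "0 \<in> f ` S" using S(3) pl_zero[OF f] by (metis image_eqI)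
  moreover have "inv f ` f ` S \<subseteq> A" using S(2) pl_inv_f(1)[OF f] by auto
  moreover have "inv f t = t" if "t \<notin> {0..<r}" for t
    using pl_inv_range[OF f, of t] pl_basic(3)[OF f, of "inv f t"] pl_inv_f(2)[OF f, of t] that by simp
  ultimately show ?thesis unfolding is_pl_def using pieces_affine_inv[OF f S(5)] S(1) by blast
qed

lemma pl_id: "is_pl id"
proof -
  have "affine_on id {u..<v}" for u v unfolding affine_on_def using L_one by force
  then have "pieces_affine {0} id" unfolding pieces_affine_def by blast
  moreover have "homeomorphism {0..<r} {0..<r} id id" using homeomorphism_ident by (simp add: id_def)
  moreover have "finite {0::real}" "0 \<in> {0::real}" "{0} \<subseteq> A \<inter> {0..<r}" "id ` {0} \<subseteq> A"
    "\<forall>t. t \<notin> {0..<r} \<longrightarrow> id t = t" using A_zero r_pos by auto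
  ultimately show ?thesis unfolding is_pl_def by blast
qed

lemma pl_funpow: assumes "is_pl f" shows "is_pl (f ^^ n)"
proof (induction n)
  case 0 show ?case using pl_id by (simp only: funpow.simps(1))
next
  case (Suc n) show ?case using pl_comp[OF assms Suc.IH] by (simp only: funpow.simps(2))
qed

lemma PLF_comp: "f \<in> PLF r L A \<Longrightarrow> g \<in> PLF r L A \<Longrightarrow> f \<circ> g \<in> PLF r L A"
  using pl_comp PLF_iff_pl by blast
lemma PLF_inv: "f \<in> PLF r L A \<Longrightarrow> inv f \<in> PLF r L A"
  using pl_inv PLF_iff_pl by blast
lemma PLF_id: "id \<in> PLF r L A"
  using pl_id PLF_iff_pl by blast

end

section \<open>The centralizer of x in F_I\<close>

locale centralizer_setting = pl_group +
  fixes \<alpha> \<beta> :: real and x :: "real \<Rightarrow> real"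
  assumes alpha: "\<alpha> \<in> {0..r} \<inter> A" and beta: "\<beta> \<in> {0..r} \<inter> A" and alpha_beta: "\<alpha> < \<beta>"
    and x_mem: "x \<in> PLF_on r L A {\<alpha><..<\<beta>}"
    and x_fix: "fixset r x \<inter> {\<alpha><..<\<beta>} \<inter> A = {}"
begin

abbreviation "G \<equiv> PLF_on r L A {\<alpha><..<\<beta>}"
abbreviation "C \<equiv> centralizer_in G x"

lemma alpha_ge: "0 \<le> \<alpha>" and alpha_lt: "\<alpha> < r" and beta_le: "\<beta> \<le> r"
  using alpha beta alpha_beta by auto

lemma G_pl: "y \<in> G \<Longrightarrow> is_pl y" unfolding PLF_on_def using PLF_imp_pl by blast

lemma G_fix: assumes "y \<in> G" "t \<notin> {\<alpha><..<\<beta>}" shows "y t = t"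
proof (cases "t \<in> {0..<r}")
  case True then show ?thesis using assms unfolding PLF_on_def supp_def by blast
next
  case False then show ?thesis using pl_basic(3)[OF G_pl[OF assms(1)]] by blast
qed

lemma G_alpha: "y \<in> G \<Longrightarrow> y \<alpha> = \<alpha>" and G_beta: "y \<in> G \<Longrightarrow> y \<beta> = \<beta>"
  using G_fix by simp_all

lemma G_memI: assumes "y \<in> PLF r L A" "\<And>t. t \<notin> {\<alpha><..<\<beta>} \<Longrightarrow> y t = t" shows "y \<in> G"
proof -
  have "supp r y \<subseteq> {\<alpha><..<\<beta>}" unfolding supp_def using assms(2) by blast
  then show ?thesis unfolding PLF_on_def using assms(1) by blast
qed

lemma G_comp: assumes "y \<in> G" "z \<in> G" shows "y \<circ> z \<in> G"
proof (rule G_memI)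
  show "y \<circ> z \<in> PLF r L A" using assms PLF_comp unfolding PLF_on_def by blast
  fix t assume "t \<notin> {\<alpha><..<\<beta>}"
  then show "(y \<circ> z) t = t" using G_fix[OF assms(1)] G_fix[OF assms(2)] by simp
qed

lemma G_inv: assumes "y \<in> G" shows "inv y \<in> G"
proof (rule G_memI)
  show "inv y \<in> PLF r L A" using assms PLF_inv unfolding PLF_on_def by blast
  fix t assume "t \<notin> {\<alpha><..<\<beta>}"
  then show "inv y t = t" using G_fix[OF assms] pl_inv_f(1)[OF G_pl[OF assms], of t] by simp
qed

lemma x_G: "x \<in> G" using x_mem .
lemma x_pl: "is_pl x" using G_pl[OF x_G] .

lemma C_iff: "y \<in> C \<longleftrightarrow> y \<in> G \<and> y \<circ> x = x \<circ> y" unfolding centralizer_in_def by simp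
lemma C_G: "y \<in> C \<Longrightarrow> y \<in> G" unfolding C_iff by simp
lemma C_pl: "y \<in> C \<Longrightarrow> is_pl y" using C_G G_pl by blast
lemma C_comm: assumes "y \<in> C" shows "y (x t) = x (y t)"
proof -
  have "(y \<circ> x) t = (x \<circ> y) t" using assms unfolding C_iff by simp
  then show ?thesis by simp
qed

lemma C_comm_inv: "y \<in> C \<Longrightarrow> y (inv x t) = inv x (y t)"
  by (rule inv_commute[OF pl_bij[OF x_pl] C_comm])

lemma C_id: "id \<in> C"
  unfolding C_iff using G_memI[OF PLF_id] by simp

lemma C_comp: "y \<in> C \<Longrightarrow> z \<in> C \<Longrightarrow> y \<circ> z \<in> C"
  using G_comp unfolding C_iff by (metis comp_assoc)

lemma C_inv: assumes "y \<in> C" shows "inv y \<in> C"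
proof -
  have "x (y t) = y (x t)" for t using C_comm[OF assms] by simp
  then have "x (inv y t) = inv y (x t)" for t by (rule inv_commute[OF pl_bij[OF C_pl[OF assms]]])
  then show ?thesis using G_inv C_G[OF assms] unfolding C_iff by (auto simp: fun_eq_iff)
qed

lemma x_nofix_A: assumes "t \<in> {\<alpha><..<\<beta>}" "t \<in> A" shows "x t \<noteq> t"
proof
  assume "x t = t"
  then have "t \<in> fixset r x" unfolding fixset_def using assms alpha_ge beta_le by auto
  then show False using x_fix assms by blast
qed

text \<open>Since A is dense, x is nowhere the identity on a subinterval of I.\<close>
lemma x_not_id_on_interval:
  assumes "\<alpha> \<le> a" "a < b" "b \<le> \<beta>" "\<forall>w\<in>{a..b}. x w = w"
  shows False
proof -
  obtain t where "t \<in> A" "a < t" "t < b" using A_dense[OF assms(2)] by blast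
  then show False using x_nofix_A[of t] assms by auto
qed

lemma affine_two_fixed_points:
  fixes f :: "real \<Rightarrow> real"
  assumes "\<forall>w\<in>{a..b}. f w = l * w + c" "f a = a" "f b = b" "a < b"
  shows "\<forall>w\<in>{a..b}. f w = w"
  using affine_fixing_two_points[of l a c b] assms by auto

lemma x_fixed_points_separated:
  assumes "\<alpha> \<le> a" "a < b" "b \<le> \<beta>" "x a = a" "x b = b" "\<forall>w\<in>{a..b}. x w = l * w + c"
  shows False
  using x_not_id_on_interval[OF assms(1-3)] affine_two_fixed_points[OF assms(6,4,5,2)] by blast

subsection \<open>The first fixed point p of x and the map g\<close>

definition fixed_points :: "real set" where
  "fixed_points = {q \<in> {\<alpha><..\<beta>}. x q = q}"

definition p :: real where "p = Inf fixed_points"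

text \<open>x is affine near alpha, so its fixed points stay away from alpha.\<close>
lemma fixed_points_bounded_away: "\<exists>d>0. \<forall>q\<in>fixed_points. \<alpha> + d < q"
proof -
  obtain d l c where g: "d > 0" "l \<in> L" "\<forall>w\<in>{\<alpha>..\<alpha>+d}. x w = l * w + c"
    using pl_right_germ[OF x_pl alpha_ge alpha_lt] by blast
  define d' where "d' = min d ((\<beta> - \<alpha>)/2)"
  have d': "d' > 0" "d' \<le> d" "\<alpha> + d' < \<beta>"
    unfolding d'_def using g alpha_beta min.cobounded2[of d "(\<beta> - \<alpha>)/2"] by auto
  have "\<alpha> + d' < q" if q: "q \<in> fixed_points" for q
  proof (rule ccontr)
    assume "\<not> \<alpha> + d' < q"
    then have "\<forall>w\<in>{\<alpha>..q}. x w = l * w + c" using g(3) d'(2) by auto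
    then show False using x_fixed_points_separated[of \<alpha> q l c] q d'(3) G_alpha[OF x_G]
      unfolding fixed_points_def by auto
  qed
  then show ?thesis using d'(1) by blast
qed

lemma beta_fixed_point: "\<beta> \<in> fixed_points"
  unfolding fixed_points_def using alpha_beta G_beta[OF x_G] by simp

lemma fixed_points_bdd: "bdd_below fixed_points"
  unfolding fixed_points_def by (rule bdd_belowI[of _ \<alpha>]) simp

lemma p_le_fixed_point: "q \<in> fixed_points \<Longrightarrow> p \<le> q"
  unfolding p_def using cInf_lower[OF _ fixed_points_bdd] by blast

lemma p_le_beta: "p \<le> \<beta>" using p_le_fixed_point[OF beta_fixed_point] .

lemma alpha_less_p: "\<alpha> < p"
proof -
  obtain d where d: "d > 0" "\<And>q. q \<in> fixed_points \<Longrightarrow> \<alpha> + d < q"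
    using fixed_points_bounded_away by blast
  have "\<alpha> + d \<le> p" unfolding p_def
    using cInf_greatest[of fixed_points "\<alpha> + d"] beta_fixed_point d(2) less_imp_le by blast
  then show ?thesis using d(1) by linarith
qed

lemma no_fixed_point_before_p: "\<alpha> < t \<Longrightarrow> t < p \<Longrightarrow> x t \<noteq> t"
  using p_le_fixed_point[of t] p_le_beta unfolding fixed_points_def by force

text \<open>p itself is fixed: otherwise fixed points would accumulate at p from the right inside
  a single affine piece of x.\<close>
lemma p_fixed: "x p = p"
proof (rule ccontr)
  assume np: "x p \<noteq> p"
  have "p < r"
  proof (rule ccontr)
    assume "\<not> p < r"
    then have "p = \<beta>" using p_le_beta beta_le by linarith
    then show False using np G_beta[OF x_G] by simp
  qed
  then obtain \<eta> l c where g: "\<eta> > 0" "l \<in> L" "\<forall>w\<in>{p..p+\<eta>}. x w = l * w + c"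
    using pl_right_germ[OF x_pl, of p] alpha_less_p alpha_ge by force
  have near: "\<exists>q\<in>fixed_points. q < b" if "p < b" for b
    using cInf_less_iff[of fixed_points b] beta_fixed_point fixed_points_bdd that unfolding p_def by blast
  obtain q1 where q1: "q1 \<in> fixed_points" "q1 < p + \<eta>" using near g(1) by force
  have "p \<noteq> q1" using q1(1) np unfolding fixed_points_def by force
  then have "p < q1" using p_le_fixed_point[OF q1(1)] by simp
  then obtain q2 where q2: "q2 \<in> fixed_points" "q2 < q1" using near by blast
  have "p \<noteq> q2" using q2(1) np unfolding fixed_points_def by force
  then have "p < q2" using p_le_fixed_point[OF q2(1)] by simp
  then have "\<forall>w\<in>{q2..q1}. x w = l * w + c" using g(3) q1(2) by auto
  then show False using x_fixed_points_separated[of q2 q1 l c] q1 q2 \<open>p < q2\<close> alpha_less_p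
    unfolding fixed_points_def by auto
qed

lemma p_pos: "0 < p" and p_le: "p \<le> r" using alpha_less_p p_le_beta alpha_ge beta_le by auto

text \<open>On (alpha, p), x lies entirely above or entirely below the diagonal (intermediate values).\<close>
lemma x_sign: "(\<forall>t. \<alpha> < t \<and> t < p \<longrightarrow> t < x t) \<or> (\<forall>t. \<alpha> < t \<and> t < p \<longrightarrow> x t < t)"
proof (rule ccontr)
  assume "\<not> ?thesis"
  then obtain t1 t2 where t1: "\<alpha> < t1" "t1 < p" "x t1 \<le> t1" and t2: "\<alpha> < t2" "t2 < p" "t2 \<le> x t2"
    by (meson not_le)
  have cont: "continuous_on {a..b} (\<lambda>t. x t - t)" if "\<alpha> < a" "b < p" for a b
  proof -
    have "{a..b} \<subseteq> {0..<r}" using that alpha_ge p_le by auto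
    then show ?thesis using continuous_on_subset[OF pl_basic(1)[OF x_pl]] by (intro continuous_intros) auto
  qed
  have "\<exists>t. min t1 t2 \<le> t \<and> t \<le> max t1 t2 \<and> x t - t = 0"
  proof (cases "t1 \<le> t2")
    case True then show ?thesis using IVT'[of "\<lambda>t. x t - t" t1 0 t2] cont[of t1 t2] t1 t2 by auto
  next
    case False then show ?thesis using IVT2'[of "\<lambda>t. x t - t" t1 0 t2] cont[of t2 t1] t1 t2 by auto
  qed
  then show False using no_fixed_point_before_p t1 t2 by force
qed

definition g :: "real \<Rightarrow> real" where
  "g = (if \<forall>t. \<alpha> < t \<and> t < p \<longrightarrow> t < x t then x else inv x)"

lemma inv_x_moves_right:
  assumes below: "\<forall>t. \<alpha> < t \<and> t < p \<longrightarrow> x t < t" and t: "\<alpha> < t" "t < p"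
  shows "t < inv x t"
proof (rule ccontr)
  assume "\<not> t < inv x t"
  then have "x (inv x t) \<le> x t" using pl_le_iff[OF x_pl, of "inv x t" t] by simp
  then show False using below t pl_inv_f(2)[OF x_pl, of t] by auto
qed

lemma g_props: "is_pl g" "g \<alpha> = \<alpha>" "g p = p" "\<And>t. \<alpha> < t \<Longrightarrow> t < p \<Longrightarrow> t < g t"
  "\<And>y t. y \<in> C \<Longrightarrow> y (g t) = g (y t)"
proof -
  have xa: "x \<alpha> = \<alpha>" using G_alpha[OF x_G] .
  have "is_pl g \<and> g \<alpha> = \<alpha> \<and> g p = p \<and> (\<forall>t. \<alpha> < t \<and> t < p \<longrightarrow> t < g t) \<and>
      (\<forall>y t. y \<in> C \<longrightarrow> y (g t) = g (y t))"
  proof (cases "\<forall>t. \<alpha> < t \<and> t < p \<longrightarrow> t < x t")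
    case True
    moreover have "g = x" unfolding g_def by (rule if_P[OF True])
    ultimately show ?thesis using x_pl xa p_fixed C_comm by simp
  next
    case False
    then have "\<forall>t. \<alpha> < t \<and> t < p \<longrightarrow> x t < t" using x_sign by blast
    then have "\<forall>t. \<alpha> < t \<and> t < p \<longrightarrow> t < inv x t" using inv_x_moves_right by blast
    moreover have "inv x \<alpha> = \<alpha>" "inv x p = p"
      using pl_inv_f(1)[OF x_pl, of \<alpha>] pl_inv_f(1)[OF x_pl, of p] xa p_fixed by simp_all
    moreover have "g = inv x" unfolding g_def by (rule if_not_P[OF False])
    ultimately show ?thesis using pl_inv[OF x_pl] C_comm_inv by simp
  qed
  then show "is_pl g" "g \<alpha> = \<alpha>" "g p = p" "\<And>t. \<alpha> < t \<Longrightarrow> t < p \<Longrightarrow> t < g t"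
    "\<And>y t. y \<in> C \<Longrightarrow> y (g t) = g (y t)" by auto
qed

lemma g_less_iff: "g u < g v \<longleftrightarrow> u < v" using pl_less_iff[OF g_props(1)] .

text \<open>Every element of C fixes p: it permutes the fixed points of x and fixes alpha.\<close>
lemma C_not_below_p: assumes "y \<in> C" shows "\<not> y p < p"
proof
  assume "y p < p"
  moreover have "\<alpha> < y p" using pl_less_iff[OF C_pl[OF assms], of \<alpha> p] alpha_less_p G_alpha[OF C_G[OF assms]] by simp
  moreover have "x (y p) = y p" using C_comm[OF assms, of p] p_fixed by simp
  ultimately show False using no_fixed_point_before_p by blast
qed

lemma C_fix_p: assumes "y \<in> C" shows "y p = p"
proof -
  have "\<not> inv y p < p" using C_not_below_p[OF C_inv[OF assms]] .
  then have "y p \<le> y (inv y p)" using pl_le_iff[OF C_pl[OF assms], of p "inv y p"] by simp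
  then show ?thesis using C_not_below_p[OF assms] pl_inv_f(2)[OF C_pl[OF assms], of p] by simp
qed

subsection \<open>The slope at alpha\<close>

definition slope :: "(real \<Rightarrow> real) \<Rightarrow> real" where
  "slope y = (THE s. \<exists>\<delta>>0. \<forall>w\<in>{\<alpha>..\<alpha>+\<delta>}. y w = \<alpha> + s * (w - \<alpha>))"

lemma slope_eq:
  assumes "\<delta> > 0" "\<forall>w\<in>{\<alpha>..\<alpha>+\<delta>}. y w = \<alpha> + s * (w - \<alpha>)"
  shows "slope y = s"
  unfolding slope_def
proof (rule the_equality)
  show "\<exists>\<delta>>0. \<forall>w\<in>{\<alpha>..\<alpha>+\<delta>}. y w = \<alpha> + s * (w - \<alpha>)" using assms by blast
  fix s' assume "\<exists>\<delta>>0. \<forall>w\<in>{\<alpha>..\<alpha>+\<delta>}. y w = \<alpha> + s' * (w - \<alpha>)"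
  then obtain \<delta>' where d': "\<delta>' > 0" "\<forall>w\<in>{\<alpha>..\<alpha>+\<delta>'}. y w = \<alpha> + s' * (w - \<alpha>)" by blast
  define m where "m = min \<delta> \<delta>'"
  have m: "m > 0" "\<alpha> + m \<in> {\<alpha>..\<alpha>+\<delta>}" "\<alpha> + m \<in> {\<alpha>..\<alpha>+\<delta>'}" unfolding m_def using assms d' by auto
  have "y (\<alpha> + m) = \<alpha> + s * m" using assms(2) m(2) by simp
  moreover have "y (\<alpha> + m) = \<alpha> + s' * m" using d'(2) m(3) by simp
  ultimately show "s' = s" using m(1) by simp
qed

lemma slope_germ:
  assumes "y \<in> G"
  shows "\<exists>\<delta>>0. \<forall>w\<in>{\<alpha>..\<alpha>+\<delta>}. y w = \<alpha> + slope y * (w - \<alpha>)" "slope y \<in> L" "slope y > 0"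
proof -
  obtain \<delta> l where h: "\<delta> > 0" "l \<in> L" "\<forall>w\<in>{\<alpha>..\<alpha>+\<delta>}. y w = \<alpha> + l * (w - \<alpha>)"
    using pl_right_germ_fixed[OF G_pl[OF assms] alpha_ge alpha_lt G_alpha[OF assms]] by blast
  have "slope y = l" using h(1,3) by (rule slope_eq)
  then show "\<exists>\<delta>>0. \<forall>w\<in>{\<alpha>..\<alpha>+\<delta>}. y w = \<alpha> + slope y * (w - \<alpha>)" "slope y \<in> L" "slope y > 0"
    using h L_pos by auto
qed

text \<open>The slope is multiplicative (chain rule for germs).\<close>
lemma slope_comp:
  assumes "y \<in> G" "z \<in> G"
  shows "slope (y \<circ> z) = slope y * slope z"
proof -
  obtain \<delta>y where dy: "\<delta>y > 0" "\<forall>w\<in>{\<alpha>..\<alpha>+\<delta>y}. y w = \<alpha> + slope y * (w - \<alpha>)"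
    using slope_germ(1)[OF assms(1)] by blast
  obtain \<delta>z where dz: "\<delta>z > 0" "\<forall>w\<in>{\<alpha>..\<alpha>+\<delta>z}. z w = \<alpha> + slope z * (w - \<alpha>)"
    using slope_germ(1)[OF assms(2)] by blast
  have sz: "slope z > 0" using slope_germ(3)[OF assms(2)] .
  define m where "m = min \<delta>z (\<delta>y / slope z)"
  have m: "m > 0" "m \<le> \<delta>z" "slope z * m \<le> \<delta>y" unfolding m_def using dy dz sz by (auto simp: field_simps min_def)
  have "(y \<circ> z) w = \<alpha> + (slope y * slope z) * (w - \<alpha>)" if w: "w \<in> {\<alpha>..\<alpha>+m}" for w
  proof -
    have zw: "z w = \<alpha> + slope z * (w - \<alpha>)" using dz w m by auto
    have "slope z * (w - \<alpha>) \<le> slope z * m" by (rule mult_left_mono) (use w sz in auto)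
    then have "slope z * (w - \<alpha>) \<le> \<delta>y" using m(3) by linarith
    moreover have "0 \<le> slope z * (w - \<alpha>)" using sz w by simp
    ultimately have "z w \<in> {\<alpha>..\<alpha>+\<delta>y}" using zw by simp
    then show ?thesis using dy(2) zw by simp
  qed
  then show ?thesis using slope_eq m(1) by blast
qed

subsection \<open>Dynamics of g on (alpha, p)\<close>

lemma g_germ_alpha:
  obtains \<rho> e where "\<rho> > 1" "\<alpha> < e" "e < p" "\<forall>w\<in>{\<alpha>..e}. g w = \<alpha> + \<rho> * (w - \<alpha>)"
proof -
  obtain \<delta> l where h: "\<delta> > 0" "\<forall>w\<in>{\<alpha>..\<alpha>+\<delta>}. g w = \<alpha> + l * (w - \<alpha>)"
    using pl_right_germ_fixed[OF g_props(1) alpha_ge alpha_lt g_props(2)] by blast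
  define e where "e = \<alpha> + min \<delta> ((p - \<alpha>)/2)"
  have e: "\<alpha> < e" "e \<le> \<alpha> + \<delta>" "e < p"
    unfolding e_def using h(1) alpha_less_p min.cobounded1[of \<delta> "(p - \<alpha>)/2"] min.cobounded2[of \<delta> "(p - \<alpha>)/2"]
    by auto
  then have ge: "\<forall>w\<in>{\<alpha>..e}. g w = \<alpha> + l * (w - \<alpha>)" using h(2) by auto
  have "0 < (l - 1) * (e - \<alpha>)" using g_props(4)[OF e(1,3)] ge e(1) by (simp add: algebra_simps)
  then have "l > 1" using e(1) by (simp add: zero_less_mult_iff)
  then show ?thesis using that[OF _ e(1,3) ge] by blast
qed

lemma g_germ_p:
  obtains \<mu> d where "0 < \<mu>" "\<mu> < 1" "\<alpha> < d" "d < p" "\<forall>w\<in>{d..p}. g w = p + \<mu> * (w - p)"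
proof -
  obtain \<delta> l where h: "\<delta> > 0" "l \<in> L" "\<forall>w\<in>{p-\<delta>..p}. g w = p + l * (w - p)"
    using pl_left_germ_fixed[OF g_props(1) p_pos p_le g_props(3)] by blast
  define d where "d = p - min \<delta> ((p - \<alpha>)/2)"
  have d: "\<alpha> < d" "p - \<delta> \<le> d" "d < p"
    unfolding d_def using h(1) alpha_less_p min.cobounded1[of \<delta> "(p - \<alpha>)/2"] min.cobounded2[of \<delta> "(p - \<alpha>)/2"]
    by auto
  then have gd: "\<forall>w\<in>{d..p}. g w = p + l * (w - p)" using h(3) by auto
  have "0 < (1 - l) * (p - d)" using g_props(4)[OF d(1,3)] gd d(3) by (simp add: algebra_simps)
  then have "l < 1" using d(3) by (simp add: zero_less_mult_iff)
  then show ?thesis using that[OF _ _ d(1,3) gd] L_pos[OF h(2)] by blast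
qed

abbreviation "h \<equiv> inv g"

lemma h_props: "is_pl h" "h \<alpha> = \<alpha>" "\<And>t. \<alpha> < t \<Longrightarrow> t < p \<Longrightarrow> \<alpha> < h t \<and> h t < t"
  "\<And>y t. y \<in> C \<Longrightarrow> y (h t) = h (y t)"
proof -
  note g = g_props(1)
  show "is_pl h" using pl_inv[OF g] .
  show ha: "h \<alpha> = \<alpha>" using pl_inv_f(1)[OF g, of \<alpha>] g_props(2) by simp
  show "\<And>y t. y \<in> C \<Longrightarrow> y (h t) = h (y t)" using inv_commute[OF pl_bij[OF g]] g_props(5) by blast
  fix t assume t: "\<alpha> < t" "t < p"
  have "h t < t" using pl_less_iff[OF g, of "h t" t] pl_inv_f(2)[OF g, of t] g_props(4)[OF t] by simp
  then show "\<alpha> < h t \<and> h t < t" using pl_inv_less_iff[OF g, of \<alpha> t] t(1) ha by simp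
qed

lemma h_orbit: "\<alpha> < t \<Longrightarrow> t < p \<Longrightarrow> \<alpha> < (h ^^ n) t \<and> (h ^^ n) t \<le> t"
proof (induction n)
  case (Suc n)
  then have "\<alpha> < (h ^^ n) t" "(h ^^ n) t < p" by auto
  then show ?case using h_props(3) Suc by force
qed simp

lemma g_orbit: "\<alpha> < t \<Longrightarrow> t < p \<Longrightarrow> t \<le> (g ^^ n) t \<and> (g ^^ n) t < p"
proof (induction n)
  case (Suc n)
  then have a: "\<alpha> < (g ^^ n) t" "(g ^^ n) t < p" by auto
  have "g ((g ^^ n) t) < p" using g_less_iff[of "(g ^^ n) t" p] a(2) g_props(3) by simp
  then show ?case using g_props(4)[OF a] Suc by force
qed simp

text \<open>Backward orbits of g tend to alpha: a positive lower bound would be a fixed point of h.\<close>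
lemma orbit_down:
  assumes t0: "\<alpha> < t0" "t0 < p" and eps: "\<epsilon> > 0"
  shows "\<exists>n. (h ^^ n) t0 < \<alpha> + \<epsilon>"
proof (rule ccontr)
  assume "\<not> ?thesis"
  then have ge: "\<forall>n. \<alpha> + \<epsilon> \<le> (h ^^ n) t0" by (simp add: not_less)
  define a where "a = (\<lambda>n. (h ^^ n) t0)"
  have bdd: "bdd_below (range a)" unfolding a_def using ge by (meson bdd_belowI2)
  define m where "m = Inf (range a)"
  have m_le: "m \<le> a n" for n unfolding m_def using bdd by (simp add: cINF_lower)
  have "\<alpha> + \<epsilon> \<le> m" unfolding m_def a_def using ge by (simp add: cINF_greatest)
  moreover have "m \<le> t0" using m_le[of 0] unfolding a_def by simp
  ultimately have m: "\<alpha> < m" "m < p" using eps t0 by auto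
  have hm: "h m < m" using h_props(3)[OF m] by simp
  obtain \<eta> l c where gm: "\<eta> > 0" "l \<in> L" "\<forall>w\<in>{m..m+\<eta>}. h w = l * w + c"
    using pl_right_germ[OF h_props(1), of m] m alpha_ge p_le by force
  have lp: "l > 0" using L_pos gm(2) by simp
  define \<kappa> where "\<kappa> = min \<eta> ((m - h m) / (2 * l))"
  have kp: "\<kappa> > 0" unfolding \<kappa>_def using gm(1) hm lp by simp
  have "Inf (range a) < m + \<kappa>" using kp unfolding m_def by simp
  then obtain n where n: "a n < m + \<kappa>" using cInf_less_iff[of "range a"] bdd by auto
  have an: "a n \<in> {m..m+\<eta>}" using n m_le[of n] unfolding \<kappa>_def by auto
  have "h (a n) = h m + l * (a n - m)" using gm(3) an gm(1) by (simp add: algebra_simps)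
  also have "l * (a n - m) \<le> l * ((m - h m) / (2 * l))"
    using n lp min.cobounded2[of \<eta> "(m - h m) / (2 * l)"] unfolding \<kappa>_def by (intro mult_left_mono) auto
  then have "h m + l * (a n - m) \<le> h m + (m - h m) / 2" using lp by simp
  finally have "h (a n) < m" using hm by (simp add: field_simps)
  then show False using m_le[of "Suc n"] unfolding a_def by simp
qed

lemma orbit_up:
  assumes t0: "\<alpha> < t0" "t0 < p" and d: "d < p"
  shows "\<exists>n. d \<le> (g ^^ n) t0"
proof (rule ccontr)
  assume "\<not> ?thesis"
  then have lt: "\<forall>n. (g ^^ n) t0 < d" by (simp add: not_le)
  define a where "a = (\<lambda>n. (g ^^ n) t0)"
  have bdd: "bdd_above (range a)" unfolding a_def using lt by (meson bdd_aboveI2 less_imp_le)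
  define m where "m = Sup (range a)"
  have le_m: "a n \<le> m" for n unfolding m_def using bdd by (simp add: cSUP_upper)
  have "m \<le> d" unfolding m_def a_def using lt by (simp add: cSUP_least less_imp_le)
  moreover have "t0 \<le> m" using le_m[of 0] unfolding a_def by simp
  ultimately have m: "\<alpha> < m" "m < p" using d t0 by auto
  have gm: "m < g m" using g_props(4)[OF m] by simp
  obtain \<eta> l c where germ: "\<eta> > 0" "l \<in> L" "\<forall>w\<in>{m-\<eta>..m}. g w = l * w + c"
    using pl_left_germ[OF g_props(1), of m] m alpha_ge p_le by force
  have lp: "l > 0" using L_pos germ(2) by simp
  define \<kappa> where "\<kappa> = min \<eta> ((g m - m) / (2 * l))"
  have kp: "\<kappa> > 0" unfolding \<kappa>_def using germ(1) gm lp by simp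
  have "m - \<kappa> < Sup (range a)" using kp unfolding m_def by simp
  then obtain n where n: "m - \<kappa> < a n" using less_cSup_iff[of "range a"] bdd by auto
  have an: "a n \<in> {m-\<eta>..m}" using n le_m[of n] unfolding \<kappa>_def by auto
  have eq: "g (a n) = g m - l * (m - a n)" using germ(3) an germ(1) by (simp add: algebra_simps)
  have "l * (m - a n) \<le> l * ((g m - m) / (2 * l))"
    using n lp min.cobounded2[of \<eta> "(g m - m) / (2 * l)"] unfolding \<kappa>_def by (intro mult_left_mono) auto
  also have "\<dots> = (g m - m) / 2" using lp by simp
  finally have "m < g (a n)" using eq gm by simp
  then show False using le_m[of "Suc n"] unfolding a_def by simp
qed

subsection \<open>Rigidity of elements of C near alpha and near p\<close>

text \<open>If y in C is linear of slope s at most rho on [alpha, alpha + D] (inside the range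
  [alpha, e] where g is linear of slope rho), then, since y commutes with g, it is linear on
  [alpha, alpha + rho D]; iterating covers all of [alpha, e].\<close>
lemma linear_near_alpha_step:
  assumes rho: "\<rho> > 1" and ge: "\<forall>w\<in>{\<alpha>..e}. g w = \<alpha> + \<rho> * (w - \<alpha>)"
    and y: "y \<in> C" and s: "0 < s" "s \<le> \<rho>"
    and lin: "\<forall>w\<in>{\<alpha>..min e (\<alpha> + D)}. y w = \<alpha> + s * (w - \<alpha>)"
  shows "\<forall>w\<in>{\<alpha>..min e (\<alpha> + \<rho> * D)}. y w = \<alpha> + s * (w - \<alpha>)"
proof
  fix w assume w: "w \<in> {\<alpha>..min e (\<alpha> + \<rho> * D)}"
  define w' where "w' = \<alpha> + (w - \<alpha>) / \<rho>"
  have "(w - \<alpha>) * 1 \<le> (w - \<alpha>) * \<rho>" by (rule mult_left_mono) (use w rho in auto)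
  then have "(w - \<alpha>) / \<rho> \<le> w - \<alpha>" using rho by (simp add: divide_le_eq)
  moreover have "(w - \<alpha>) / \<rho> \<le> D" "0 \<le> (w - \<alpha>) / \<rho>" using w rho by (auto simp: divide_le_eq mult.commute)
  ultimately have w': "w' \<in> {\<alpha>..e}" "w' \<in> {\<alpha>..min e (\<alpha> + D)}" unfolding w'_def using w by auto
  have gw': "g w' = w" using ge w'(1) rho unfolding w'_def by simp
  have yw': "y w' = \<alpha> + (s / \<rho>) * (w - \<alpha>)" using lin w'(2) unfolding w'_def by simp
  have "(s / \<rho>) * (w - \<alpha>) \<le> w - \<alpha>" "0 \<le> (s / \<rho>) * (w - \<alpha>)"
    using s rho w mult_right_mono[of "s / \<rho>" 1 "w - \<alpha>"] by auto
  then have "y w' \<in> {\<alpha>..e}" using yw' w by auto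
  then have "g (y w') = \<alpha> + s * (w - \<alpha>)" using ge yw' rho by simp
  then show "y w = \<alpha> + s * (w - \<alpha>)" using g_props(5)[OF y, of w'] gw' by simp
qed

lemma linear_near_alpha:
  assumes rho: "\<rho> > 1" and ge: "\<forall>w\<in>{\<alpha>..e}. g w = \<alpha> + \<rho> * (w - \<alpha>)"
    and y: "y \<in> C" and s: "slope y \<le> \<rho>"
  shows "\<forall>w\<in>{\<alpha>..e}. y w = \<alpha> + slope y * (w - \<alpha>)"
proof -
  obtain \<delta> where d: "\<delta> > 0" "\<forall>w\<in>{\<alpha>..\<alpha>+\<delta>}. y w = \<alpha> + slope y * (w - \<alpha>)"
    using slope_germ(1)[OF C_G[OF y]] by blast
  have "\<forall>w\<in>{\<alpha>..min e (\<alpha> + \<rho>^k * \<delta>)}. y w = \<alpha> + slope y * (w - \<alpha>)" for k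
  proof (induction k)
    case 0 then show ?case using d by auto
  next
    case (Suc k)
    then show ?case using linear_near_alpha_step[OF rho ge y slope_germ(3)[OF C_G[OF y]] s, of "\<rho>^k * \<delta>"]
      by (simp add: mult.assoc)
  qed
  moreover obtain k where "(e - \<alpha>) / \<delta> < \<rho> ^ k" using real_arch_pow[OF rho] by blast
  then have "min e (\<alpha> + \<rho>^k * \<delta>) = e" using d(1) by (simp add: field_simps)
  ultimately show ?thesis by metis
qed

text \<open>The mirror statement at p, conjugating by g which contracts towards p.\<close>
lemma linear_near_p_step:
  assumes mu: "0 < \<mu>" "\<mu> < 1" and gd: "\<forall>w\<in>{d..p}. g w = p + \<mu> * (w - p)"
    and y: "y \<in> C" and s: "0 < s" "s \<le> 1"
    and lin: "\<forall>w\<in>{max d (p - D)..p}. y w = p + s * (w - p)"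
  shows "\<forall>w\<in>{max d (p - D / \<mu>)..p}. y w = p + s * (w - p)"
proof
  fix w assume w: "w \<in> {max d (p - D / \<mu>)..p}"
  have gw: "g w = p + \<mu> * (w - p)" using gd w by simp
  have "\<mu> * (p - w) \<le> p - w" "0 \<le> \<mu> * (p - w)" "\<mu> * (p - w) \<le> D"
    using mu w mult_right_mono[of \<mu> 1 "p - w"] by (auto simp: field_simps)
  then have "g w \<in> {max d (p - D)..p}" using gw w by (auto simp: algebra_simps)
  then have ygw: "y (g w) = p + s * (g w - p)" using lin by blast
  define z where "z = p + s * (w - p)"
  have "s * (p - w) \<le> p - w" "0 \<le> s * (p - w)" using s w mult_right_mono[of s 1 "p - w"] by auto
  then have "z \<in> {d..p}" unfolding z_def using w by (auto simp: algebra_simps)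
  then have "g z = p + \<mu> * (z - p)" using gd by blast
  also have "\<dots> = p + s * (g w - p)" unfolding z_def gw by (simp add: algebra_simps)
  also have "\<dots> = y (g w)" using ygw by simp
  also have "\<dots> = g (y w)" using g_props(5)[OF y] by simp
  finally show "y w = p + s * (w - p)" using g_less_iff unfolding z_def by (metis less_irrefl linorder_neqE_linordered_idom)
qed

lemma linear_near_p:
  assumes mu: "0 < \<mu>" "\<mu> < 1" and gd: "\<forall>w\<in>{d..p}. g w = p + \<mu> * (w - p)"
    and y: "y \<in> C" and de: "\<delta> > 0" "\<forall>w\<in>{p-\<delta>..p}. y w = p + s * (w - p)" and s: "0 < s" "s \<le> 1"
  shows "\<forall>w\<in>{d..p}. y w = p + s * (w - p)"
proof -
  have "\<forall>w\<in>{max d (p - \<delta> / \<mu>^k)..p}. y w = p + s * (w - p)" for k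
  proof (induction k)
    case 0 then show ?case using de by auto
  next
    case (Suc k)
    then show ?case using linear_near_p_step[OF mu gd y s, of "\<delta> / \<mu>^k"] by (simp add: field_simps)
  qed
  moreover obtain k where "(p - d) / \<delta> < (1/\<mu>) ^ k" using real_arch_pow[of "1/\<mu>"] mu by auto
  then have "max d (p - \<delta> / \<mu>^k) = d" using de(1) mu by (simp add: field_simps power_one_over)
  ultimately show ?thesis by metis
qed

text \<open>An element of C with slope above 1 at alpha moves every point of (alpha, p) to the right:
  otherwise push a point with y t \<le> t towards alpha by h, where y is expanding.\<close>
lemma C_above_diagonal:
  assumes y: "y \<in> C" and s1: "slope y > 1" and t: "\<alpha> < t" "t < p"
  shows "t < y t"
proof (rule ccontr)
  assume "\<not> t < y t"
  then have yt: "y t \<le> t" by simp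
  obtain \<delta> where d: "\<delta> > 0" "\<forall>w\<in>{\<alpha>..\<alpha>+\<delta>}. y w = \<alpha> + slope y * (w - \<alpha>)"
    using slope_germ(1)[OF C_G[OF y]] by blast
  obtain n where n: "(h ^^ n) t < \<alpha> + \<delta>" using orbit_down[OF t d(1)] by blast
  define w where "w = (h ^^ n) t"
  have w: "\<alpha> < w" "w < \<alpha> + \<delta>" using h_orbit[OF t, of n] n unfolding w_def by auto
  have "y w = (h ^^ n) (y t)" unfolding w_def using funpow_commute[of y h n t] h_props(4)[OF y] by blast
  also have "\<dots> \<le> w" unfolding w_def using pl_le_iff[OF pl_funpow[OF h_props(1)]] yt by blast
  finally have "y w \<le> w" .
  moreover have "y w = \<alpha> + slope y * (w - \<alpha>)" using d(2) w by simp
  moreover have "1 * (w - \<alpha>) < slope y * (w - \<alpha>)" using s1 w(1) by (simp add: mult_less_cancel_right)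
  ultimately show False by simp
qed

subsection \<open>A gap in the slopes above 1\<close>

lemma C_linear_near_p:
  assumes mu: "0 < \<mu>" "\<mu> < 1" and gd: "\<forall>w\<in>{d..p}. g w = p + \<mu> * (w - p)"
    and y: "y \<in> C" and s1: "slope y > 1"
  obtains l' where "0 < l'" "l' < 1" "\<forall>w\<in>{d..p}. y w = p + l' * (w - p)"
proof -
  obtain \<delta> l' where yg: "\<delta> > 0" "l' \<in> L" "\<forall>w\<in>{p-\<delta>..p}. y w = p + l' * (w - p)"
    using pl_left_germ_fixed[OF C_pl[OF y] p_pos p_le C_fix_p[OF y]] by blast
  define w0 where "w0 = p - min \<delta> ((p - \<alpha>) / 2)"
  have w0: "\<alpha> < w0" "w0 < p" "p - \<delta> \<le> w0"
    unfolding w0_def using yg(1) alpha_less_p min.cobounded1[of \<delta> "(p - \<alpha>)/2"] min.cobounded2[of \<delta> "(p - \<alpha>)/2"]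
    by auto
  have "w0 < y w0" using C_above_diagonal[OF y s1 w0(1,2)] .
  then have "0 < (1 - l') * (p - w0)" using yg(3) w0 by (simp add: algebra_simps)
  then have "l' < 1" using w0(2) by (simp add: zero_less_mult_iff)
  moreover have "0 < l'" using L_pos[OF yg(2)] .
  ultimately show ?thesis using that linear_near_p[OF mu gd y yg(1,3)] by simp
qed

lemma transport_piece:
  assumes e: "\<alpha> < e" "e < p" and d: "d < p"
  obtains N t0 u b a where "\<alpha> < t0" "t0 < u" "u \<le> e" "0 < b"
    "\<forall>w\<in>{t0..u}. (g ^^ N) w = b * w + a" "d \<le> (g ^^ N) t0"
proof -
  define t0 where "t0 = (\<alpha> + e) / 2"
  have t0: "\<alpha> < t0" "t0 < e" unfolding t0_def using e by auto
  obtain N where N: "d \<le> (g ^^ N) t0" using orbit_up[of t0 d] t0 e d by auto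
  obtain \<eta> b a where F: "\<eta> > 0" "b \<in> L" "\<forall>w\<in>{t0..t0+\<eta>}. (g ^^ N) w = b * w + a"
    using pl_right_germ[OF pl_funpow[OF g_props(1)], of t0 N] t0 e alpha_ge p_le by force
  define u where "u = t0 + min \<eta> (e - t0)"
  have u: "t0 < u" "u \<le> t0 + \<eta>" "u \<le> e"
    unfolding u_def using F(1) t0 min.cobounded1[of \<eta> "e - t0"] min.cobounded2[of \<eta> "e - t0"] by auto
  then have "\<forall>w\<in>{t0..u}. (g ^^ N) w = b * w + a" using F(3) by auto
  then show ?thesis using that[OF t0(1) u(1,3) L_pos[OF F(2)] _ N] by blast
qed

text \<open>The core computation: y is linear of slope s near alpha and of slope l' near p, and it
  commutes with the affine transport F; comparing y (F t) = F (y t) at two points gives s = l'.\<close>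
lemma transported_slopes_agree:
  assumes y: "y \<in> C" and t: "\<alpha> < t0" "t0 < t2" "t2 < u" "u \<le> e" and b: "0 < b"
    and F: "\<forall>w\<in>{t0..u}. (g ^^ N) w = b * w + a" "d \<le> (g ^^ N) t0"
    and ya: "\<forall>w\<in>{\<alpha>..e}. y w = \<alpha> + s * (w - \<alpha>)" and yp: "\<forall>w\<in>{d..p}. y w = p + l' * (w - p)"
    and s: "1 \<le> s" "s * (t2 - \<alpha>) \<le> u - \<alpha>" and e: "e < p"
  shows "s = l'"
proof -
  have eqn: "b * (\<alpha> + s * (t - \<alpha>)) + a = p + l' * (b * t + a - p)" if tt: "t0 \<le> t" "t \<le> t2" for t
  proof -
    have yt: "y t = \<alpha> + s * (t - \<alpha>)" using ya tt t by simp
    have "1 * (t - \<alpha>) \<le> s * (t - \<alpha>)" using s(1) tt t by (intro mult_right_mono) auto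
    moreover have "s * (t - \<alpha>) \<le> s * (t2 - \<alpha>)" using s(1) tt by (intro mult_left_mono) auto
    ultimately have "y t \<in> {t0..u}" using yt tt s(2) by auto
    then have Fyt: "(g ^^ N) (y t) = b * (\<alpha> + s * (t - \<alpha>)) + a" using F(1) yt by simp
    have Ft: "(g ^^ N) t = b * t + a" using F(1) tt t by simp
    have "(g ^^ N) t0 \<le> (g ^^ N) t" using pl_le_iff[OF pl_funpow[OF g_props(1)]] tt(1) by blast
    moreover have "(g ^^ N) t < p" using g_orbit[of t N] tt t e by auto
    ultimately have "y ((g ^^ N) t) = p + l' * ((g ^^ N) t - p)" using yp F(2) by simp
    then show ?thesis using funpow_commute[of y g N t] g_props(5)[OF y] Fyt Ft by simp
  qed
  have "b * s * (t2 - t0) = l' * b * (t2 - t0)"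
    using eqn[of t0] eqn[of t2] t by (simp add: algebra_simps)
  then show ?thesis using b t by simp
qed

lemma slope_gap: "\<exists>\<Delta>>1. \<forall>y\<in>C. \<not> (1 < slope y \<and> slope y \<le> \<Delta>)"
proof -
  obtain \<rho> e where ge: "\<rho> > 1" "\<alpha> < e" "e < p" "\<forall>w\<in>{\<alpha>..e}. g w = \<alpha> + \<rho> * (w - \<alpha>)"
    by (rule g_germ_alpha)
  obtain \<mu> d where gd: "0 < \<mu>" "\<mu> < 1" "\<alpha> < d" "d < p" "\<forall>w\<in>{d..p}. g w = p + \<mu> * (w - p)"
    by (rule g_germ_p)
  obtain N t0 u b a where tr: "\<alpha> < t0" "t0 < u" "u \<le> e" "0 < b"
    "\<forall>w\<in>{t0..u}. (g ^^ N) w = b * w + a" "d \<le> (g ^^ N) t0"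
    by (rule transport_piece[OF ge(2,3) gd(4)])
  define t2 where "t2 = (t0 + u) / 2"
  have t2: "t0 < t2" "t2 < u" unfolding t2_def using tr by auto
  define K where "K = (u - \<alpha>) / (t2 - \<alpha>)"
  have K1: "K > 1" unfolding K_def using t2 tr(1) by (simp add: field_simps)
  have "\<not> (1 < slope y \<and> slope y \<le> min \<rho> K)" if y: "y \<in> C" for y
  proof
    assume s: "1 < slope y \<and> slope y \<le> min \<rho> K"
    have ya: "\<forall>w\<in>{\<alpha>..e}. y w = \<alpha> + slope y * (w - \<alpha>)"
      using linear_near_alpha[OF ge(1,4) y] s by simp
    obtain l' where l': "l' < 1" "\<forall>w\<in>{d..p}. y w = p + l' * (w - p)"
      using C_linear_near_p[OF gd(1,2,5) y] s by blast
    have "slope y * (t2 - \<alpha>) \<le> K * (t2 - \<alpha>)" using s t2 tr(1) by (intro mult_right_mono) auto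
    then have "slope y * (t2 - \<alpha>) \<le> u - \<alpha>" unfolding K_def using t2 tr(1) by simp
    then have "slope y = l'"
      using transported_slopes_agree[OF y tr(1) t2 tr(3,4,5,6) ya l'(2)] s ge(3) by simp
    then show False using s l'(1) by simp
  qed
  then show ?thesis using ge(1) K1 by (intro exI[of _ "min \<rho> K"]) auto
qed

subsection \<open>Elements of slope 1 are trivial\<close>

text \<open>At a fixed point q of x, q is not in A, so y is affine across q; at a point moved by x,
  use the one k of x and its inverse with k q < q.\<close>
lemma id_extends_at_fixed_point:
  assumes y: "y \<in> C" and q: "\<alpha> < q" "q < \<beta>" "x q = q" and idq: "\<forall>w\<in>{\<alpha>..q}. y w = w"
  shows "\<exists>q'>q. q' \<le> \<beta> \<and> (\<forall>w\<in>{\<alpha>..q'}. y w = w)"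
proof -
  have qA: "q \<notin> A" using x_nofix_A[of q] q by auto
  obtain \<eta> l c where yg: "\<eta> > 0" "l \<in> L" "\<forall>w\<in>{q-\<eta>..q+\<eta>}. y w = l * w + c"
    using pl_twosided_germ[OF C_pl[OF y] _ _ qA] q alpha_ge beta_le by force
  define m where "m = min \<eta> (q - \<alpha>)"
  have m: "m > 0" "m \<le> \<eta>" "m \<le> q - \<alpha>" unfolding m_def using yg q by auto
  have "y (q - m) = l * (q - m) + c" "y q = l * q + c" using yg(3) m by auto
  moreover have "y (q - m) = q - m" "y q = q" using idq m q by auto
  ultimately have "l * (q - m) + c = q - m" "l * q + c = q" by simp_all
  then have lc: "l = 1" "c = 0" using affine_fixing_two_points m(1) by auto
  define q' where "q' = min (q + \<eta>) \<beta>"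
  have q': "q < q'" "q' \<le> \<beta>" "q' \<le> q + \<eta>" unfolding q'_def using yg q by auto
  have "y w = w" if w: "w \<in> {\<alpha>..q'}" for w
    using idq yg(3) lc w q' by (cases "w \<le> q") auto
  then show ?thesis using q' by blast
qed

lemma left_mover:
  assumes "x q \<noteq> q"
  obtains k where "is_pl k" "k q < q" "k \<alpha> = \<alpha>" "\<And>y t. y \<in> C \<Longrightarrow> y (k t) = k (y t)"
proof (cases "x q < q")
  case True then show ?thesis using that[of x] x_pl G_alpha[OF x_G] C_comm by blast
next
  case False
  then have "inv x q < q"
    using assms pl_inv_less_iff[OF x_pl, of q "x q"] pl_inv_f(1)[OF x_pl, of q] by simp
  moreover have "inv x \<alpha> = \<alpha>" using pl_inv_f(1)[OF x_pl, of \<alpha>] G_alpha[OF x_G] by simp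
  ultimately show ?thesis using that[of "inv x"] pl_inv[OF x_pl] C_comm_inv by blast
qed

lemma id_extends_at_moved_point:
  assumes y: "y \<in> C" and q: "\<alpha> < q" "q < \<beta>" "x q \<noteq> q" and idq: "\<forall>w\<in>{\<alpha>..q}. y w = w"
  shows "\<exists>q'>q. q' \<le> \<beta> \<and> (\<forall>w\<in>{\<alpha>..q'}. y w = w)"
proof -
  obtain k where k: "is_pl k" "k q < q" "k \<alpha> = \<alpha>" "\<And>t. y (k t) = k (y t)"
    using left_mover[OF q(3)] y by metis
  obtain \<eta> l c where kg: "\<eta> > 0" "l \<in> L" "\<forall>w\<in>{q..q+\<eta>}. k w = l * w + c"
    using pl_right_germ[OF k(1), of q] q alpha_ge beta_le by force
  have lp: "l > 0" using L_pos kg(2) by simp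
  define \<kappa> where "\<kappa> = min \<eta> ((q - k q) / (2 * l))"
  have "\<kappa> \<le> (q - k q) / (2 * l)" unfolding \<kappa>_def by (rule min.cobounded2)
  then have "l * \<kappa> \<le> l * ((q - k q) / (2 * l))" by (rule mult_left_mono) (use lp in simp)
  also have "\<dots> = (q - k q) / 2" using lp by simp
  finally have \<kappa>: "0 < \<kappa>" "\<kappa> \<le> \<eta>" "l * \<kappa> \<le> (q - k q) / 2"
    unfolding \<kappa>_def using kg(1) k(2) lp by auto
  define q' where "q' = min (q + \<kappa>) \<beta>"
  have q': "q < q'" "q' \<le> \<beta>" "q' \<le> q + \<eta>" "q' - q \<le> \<kappa>" unfolding q'_def using \<kappa> q by auto
  have "l * (q' - q) \<le> l * \<kappa>" using q'(4) lp by simp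
  then have q'l: "l * (q' - q) \<le> (q - k q) / 2" using \<kappa>(3) by linarith
  have "y w = w" if w: "w \<in> {\<alpha>..q'}" for w
  proof (cases "w \<le> q")
    case True then show ?thesis using idq w by auto
  next
    case False
    txt \<open>k maps w into (alpha, q), where y is the identity; hence k (y w) = k w.\<close>
    then have "k w = k q + l * (w - q)" using kg(3) q' w by (auto simp: algebra_simps)
    moreover have "l * (w - q) \<le> l * (q' - q)" using w lp by (intro mult_left_mono) auto
    then have "l * (w - q) \<le> (q - k q) / 2" using q'l by (rule order_trans)
    ultimately have "k w < q" using k(2) by simp
    moreover have "\<alpha> < k w" using pl_less_iff[OF k(1), of \<alpha> w] k(3) q False by simp
    ultimately have "k (y w) = k w" using idq k(4)[of w] by simp
    then show ?thesis using pl_less_iff[OF k(1), of w "y w"] pl_less_iff[OF k(1), of "y w" w]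
      by (cases w "y w" rule: linorder_cases) auto
  qed
  then show ?thesis using q' by blast
qed

text \<open>Being the identity on [alpha, q) forces it at q, since y is affine to the left of q.\<close>
lemma id_up_to_closed:
  assumes y: "y \<in> C" and q: "\<alpha> < q" "q \<le> r" and below: "\<And>w. \<alpha> \<le> w \<Longrightarrow> w < q \<Longrightarrow> y w = w"
  shows "\<forall>w\<in>{\<alpha>..q}. y w = w"
proof -
  obtain \<eta> l c where yg: "\<eta> > 0" "l \<in> L" "\<forall>w\<in>{q-\<eta>..q}. y w = l * w + c"
    using pl_left_germ[OF C_pl[OF y], of q] q alpha_ge by force
  define m where "m = min \<eta> (q - \<alpha>)"
  have m: "m > 0" "m \<le> \<eta>" "m \<le> q - \<alpha>" unfolding m_def using yg q by auto
  have "y (q - m) = l * (q - m) + c" "y (q - m/2) = l * (q - m/2) + c" using yg(3) m by auto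
  moreover have "y (q - m) = q - m" "y (q - m/2) = q - m/2" using below m by auto
  ultimately have "l * (q - m) + c = q - m" "l * (q - m/2) + c = q - m/2" by simp_all
  then have "l = 1" "c = 0" using affine_fixing_two_points m(1) by auto
  then have "y q = q" using yg(1,3) by simp
  then show ?thesis using below by (auto simp: order_le_less)
qed

text \<open>The supremum of the q such that y is the identity on [alpha, q] must be beta.\<close>
lemma slope_one_id:
  assumes y: "y \<in> C" and s1: "slope y = 1"
  shows "y = id"
proof -
  define Qs where "Qs = {t. \<alpha> \<le> t \<and> t \<le> \<beta> \<and> (\<forall>w\<in>{\<alpha>..t}. y w = w)}"
  obtain \<delta> where d: "\<delta> > 0" "\<forall>w\<in>{\<alpha>..\<alpha>+\<delta>}. y w = w"
    using slope_germ(1)[OF C_G[OF y]] s1 by auto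
  define t1 where "t1 = \<alpha> + min \<delta> (\<beta> - \<alpha>)"
  have t1: "\<alpha> < t1" "t1 \<in> Qs" unfolding t1_def Qs_def using d alpha_beta by auto
  have bdd: "bdd_above Qs" unfolding Qs_def by (rule bdd_aboveI[of _ \<beta>]) auto
  define q where "q = Sup Qs"
  have upper: "t \<in> Qs \<Longrightarrow> t \<le> q" for t unfolding q_def using cSup_upper bdd by blast
  have qb: "q \<le> \<beta>" unfolding q_def using t1 by (intro cSup_least) (auto simp: Qs_def)
  have qa: "\<alpha> < q" using upper[OF t1(2)] t1(1) by simp
  have below: "y w = w" if w: "\<alpha> \<le> w" "w < q" for w
  proof -
    obtain t where "t \<in> Qs" "w < t" using less_cSup_iff[of Qs w] bdd t1 w unfolding q_def by blast
    then show ?thesis using w unfolding Qs_def by auto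
  qed
  have "q = \<beta>"
  proof (rule ccontr)
    assume "q \<noteq> \<beta>"
    then have qlt: "q < \<beta>" using qb by simp
    then have "\<forall>w\<in>{\<alpha>..q}. y w = w" using id_up_to_closed[OF y qa _ below] beta_le by simp
    then obtain q' where "q' > q" "q' \<le> \<beta>" "\<forall>w\<in>{\<alpha>..q'}. y w = w"
      using id_extends_at_fixed_point[OF y qa qlt] id_extends_at_moved_point[OF y qa qlt] by blast
    then show False using upper[of q'] qa unfolding Qs_def by auto
  qed
  show ?thesis
  proof
    fix w show "y w = id w"
      using below[of w] \<open>q = \<beta>\<close> G_fix[OF C_G[OF y], of w] by (cases "w \<in> {\<alpha><..<\<beta>}") auto
  qed
qed

text \<open>The slope at alpha embeds C into the positive reals with a gap above 1.\<close>
theorem centralizer_cyclic: "cyclic_fun_group C"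
proof -
  obtain \<Delta> where "\<Delta> > 1" "\<forall>y\<in>C. \<not> (1 < slope y \<and> slope y \<le> \<Delta>)" using slope_gap by blast
  then interpret slope_group C slope \<Delta>
    by unfold_locales (use C_id C_comp C_inv pl_bij[OF C_pl] slope_germ(3)[OF C_G]
        slope_comp[OF C_G C_G] slope_one_id in auto)
  show ?thesis by (rule cyclic)
qed

end

theorem lemma4p2:
  fixes r :: real and L A :: "real set" and \<alpha> \<beta> :: real and x :: "real \<Rightarrow> real"
  assumes "std_params r L A"
    and "\<alpha> \<in> {0..r} \<inter> A" and "\<beta> \<in> {0..r} \<inter> A" and "\<alpha> < \<beta>"
    and "x \<in> PLF_on r L A {\<alpha><..<\<beta>}"
    and "fixset r x \<inter> {\<alpha><..<\<beta>} \<inter> A = {}"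
  shows "cyclic_fun_group (centralizer_in (PLF_on r L A {\<alpha><..<\<beta>}) x)"
proof -
  interpret centralizer_setting r L A \<alpha> \<beta> x
    using assms by unfold_locales auto
  show ?thesis by (rule centralizer_cyclic)
qed

end
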